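(* Under the standing assumptions below, the functional equation $$F(\gamma,x,s)=\sup_{a\in\tilde{\mathcal A}(x,s)}\inf_{\lambda\in\mathbb R^I_+}\Big[r(x,a,s)+\sum_{i=1}^I\big(\gamma^ig^i(x,a,s)+\lambda^i(g^i(x,a,s)-\bar g^i)\big)+\beta\mathbb E_sF(\gamma+\lambda,\zeta(x,a,s),s')\Big]$$ has a solution in $\mathcal N$. Moreover, every solution $F\in\mathcal N$ satisfies $F(\gamma,x,s)\le\tilde D(\gamma,x,s)$ for all $(\gamma,x,s)\in\mathbb R^I_+\times\mathcal X\times\mathcal S$.
   Context: Setup. Let $\mathcal S$ be a finite set and $(s_t)_{t\ge0}$ a Markov chain on $\mathcal S$ with transition probabilities $\pi(s'|s)>0$ for all $s,s'$; for $s^t=(s_0,\dots,s_t)$ write $\pi^t(s^t|s_0)$ for its probability and $\mathbb E_{s_t}$ for expectation over future shocks given $s^t$; $\mathbb E_s$ denotes expectation over $s'\sim\pi(\cdot|s)$. Let $\mathcal A\subset\mathbb R^n$ be finite, $\mathcal X\subseteq\mathbb R^m$ countable, $\zeta:\mathcal X\times\mathcal A\times\mathcal S\to\mathcal X$, $p:\mathcal X\times\mathcal A\times\mathcal S\to\mathbb R$, $r,g^1,\dots,g^I$ bounded real functions on $\mathcal X\times\mathcal A\times\mathcal S$, $\bar g^i\in\mathbb R$, $\beta\in(0,1)$. A plan is $a=(a(s^t))_{t,s^t}$, $a(s^t)\in\mathcal A$, inducing $x(s^0)=x_0$, $x(s^{t+1})=\zeta(x(s^t),a(s^t),s_t)$.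 $\tilde{\mathcal A}(x,s)=\{a:p(x,a,s)\ge0\}$; $\tilde{\mathcal A}^\infty(x_0)$ is the set of plans with $a(s^t)\in\tilde{\mathcal A}(x(s^t),s_t)$ for all $t,s^t$. A plan is feasible for $(x_0,s_0)$ if it lies in $\tilde{\mathcal A}^\infty(x_0)$ and $\mathbb E_{s_t}\sum_{n\ge0}\beta^ng^i(x(s^{t+n}),a(s^{t+n}),s_{t+n})\ge\bar g^i$ for all $t,s^t,i$. Standing assumption: for every $(x_0,s_0)$ a feasible plan exists. $\tilde D$: post-action histories $\tilde h^t=(s_0,a_0,\dots,s_t,a_t)\in\mathcal S^{t+1}\times\mathcal A^{t+1}$; a plan generates $\tilde h^t=(s_0,a(s^0),\dots,s_t,a(s^t))$. $\tilde\Lambda$: families $\lambda^i(\tilde h^t)\ge0$ with $\sum_t\sum_{\tilde h^t}\sum_i\beta^t\lambda^i(\tilde h^t)\pi^t(s^t|s_0)<\infty$. $\tilde L(a,\lambda;\gamma,x_0,s_0)=\mathbb E_{s_0}\sum_t\beta^t\big[r(x(s^t),a(s^t),s_t)+\sum_i\gamma^ig^i(x(s^t),a(s^t),s_t)+\sum_i\lambda^i(\tilde h^t)(\sum_{n\ge0}\beta^ng^i(x(s^{t+n}),a(s^{t+n}),s_{t+n})-\bar g^i)\big]$ and $\tilde D(\gamma,x_0,s_0)=\inf_{\lambda\in\tilde\Lambda}\sup_{a\in\tilde{\mathcal A}^\infty(x_0)}\tilde L$. Function spaces. $L=(\|r\|_\infty+\sum_i\|g^i\|_\infty)/(1-\beta)$,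 $B(k)=\{\gamma\in\mathbb R^I_+:\|\gamma\|_\infty\le k\}$, $\mathcal S=\{s_1,\dots,s_{|\mathcal S|}\}$, $\mathcal X=\{x_1,x_2,\dots\}$. $\mathcal M$: functions $F:\mathbb R^I_+\times\mathcal X\times\mathcal S\to\mathbb R$ with $F(\cdot,x,s)\in L^\infty(B(k))$ for all $k$ and $\|F\|_{\mathcal M}=\sum_i2^{-i}\sum_j2^{-j}\sum_{k\ge1}2^{-k}\|F(\cdot,x_j,s_i)\|_{L^\infty(B(k))}<\infty$. $\mathcal N$: those $F\in\mathcal M$ with, for all $x,s$, (i) $F(\cdot,x,s)$ convex; (ii) $|F(\gamma_1,x,s)-F(\gamma_2,x,s)|\le L\|\gamma_1-\gamma_2\|_1$; (iii) $F(\gamma,x,s)\ge v^0+\sum_i\gamma^iv^i$ for every feasible plan for $(x,s)$, $v^0=\mathbb E_s\sum_t\beta^tr(\cdot)$, $v^i=\mathbb E_s\sum_t\beta^tg^i(\cdot)$; (iv) $F(\gamma,x,s)\le(1+\sum_i\gamma^i)L$. *)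

theory Defs
  imports "HOL-Analysis.Analysis" "HOL-Probability.Essential_Supremum"
begin

text \<open>A history s^t = (s_0,...,s_t) is represented by the list
  [s_t, ..., s_1, s_0] (newest shock first).  Transition probabilities are
  P s s' = pi(s'|s).\<close>

text \<open>Conditional probability of the continuation e (newest first) given the history h.\<close>
fun ext_prob :: "('s \<Rightarrow> 's \<Rightarrow> real) \<Rightarrow> 's list \<Rightarrow> 's list \<Rightarrow> real" where
  "ext_prob P [] h = 1"
| "ext_prob P (s' # e) h = P (hd (e @ h)) s' * ext_prob P e h"

definition path_prob :: "('s \<Rightarrow> 's \<Rightarrow> real) \<Rightarrow> 's list \<Rightarrow> real" where
  "path_prob P h = ext_prob P (butlast h) [last h]"

definition cont_value :: "real \<Rightarrow> ('s::finite \<Rightarrow> 's \<Rightarrow> real) \<Rightarrow> ('s list \<Rightarrow> real) \<Rightarrow> 's list \<Rightarrow> real" where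
  "cont_value \<beta> P f h = (\<Sum>n. \<beta> ^ n * (\<Sum>e\<in>{e::'s list. length e = n}. ext_prob P e h * f (e @ h)))"

fun state_path :: "('x \<Rightarrow> 'a \<Rightarrow> 's \<Rightarrow> 'x) \<Rightarrow> ('s list \<Rightarrow> 'a) \<Rightarrow> 'x \<Rightarrow> 's list \<Rightarrow> 'x" where
  "state_path \<zeta> a x0 [] = x0"
| "state_path \<zeta> a x0 [s] = x0"
| "state_path \<zeta> a x0 (s' # s # h) = \<zeta> (state_path \<zeta> a x0 (s # h)) (a (s # h)) s"

definition path_fun :: "('x \<Rightarrow> 'a \<Rightarrow> 's \<Rightarrow> 'x) \<Rightarrow> ('s list \<Rightarrow> 'a) \<Rightarrow> 'x \<Rightarrow> ('x \<Rightarrow> 'a \<Rightarrow> 's \<Rightarrow> real) \<Rightarrow> 's list \<Rightarrow> real" where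
  "path_fun \<zeta> a x0 f h = f (state_path \<zeta> a x0 h) (a h) (hd h)"

definition hists :: "'s \<Rightarrow> 's list set" where
  "hists s0 = {h. h \<noteq> [] \<and> last h = s0}"

definition A_tilde :: "'a set \<Rightarrow> ('x \<Rightarrow> 'a \<Rightarrow> 's \<Rightarrow> real) \<Rightarrow> 'x \<Rightarrow> 's \<Rightarrow> 'a set" where
  "A_tilde A p x s = {a \<in> A. 0 \<le> p x a s}"

definition adm_plans :: "'a set \<Rightarrow> ('x \<Rightarrow> 'a \<Rightarrow> 's \<Rightarrow> real) \<Rightarrow> ('x \<Rightarrow> 'a \<Rightarrow> 's \<Rightarrow> 'x) \<Rightarrow> 'x \<Rightarrow> 's \<Rightarrow> ('s list \<Rightarrow> 'a) set" where
  "adm_plans A p \<zeta> x0 s0 =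
     {a. \<forall>h\<in>hists s0. a h \<in> A_tilde A p (state_path \<zeta> a x0 h) (hd h)}"

definition feasible ::
  "real \<Rightarrow> ('s::finite \<Rightarrow> 's \<Rightarrow> real) \<Rightarrow> 'a set \<Rightarrow> ('x \<Rightarrow> 'a \<Rightarrow> 's \<Rightarrow> real) \<Rightarrow> ('x \<Rightarrow> 'a \<Rightarrow> 's \<Rightarrow> 'x)
   \<Rightarrow> ('i::finite \<Rightarrow> 'x \<Rightarrow> 'a \<Rightarrow> 's \<Rightarrow> real) \<Rightarrow> ('i \<Rightarrow> real) \<Rightarrow> 'x \<Rightarrow> 's \<Rightarrow> ('s list \<Rightarrow> 'a) \<Rightarrow> bool" where
  "feasible \<beta> P A p \<zeta> g gbar x0 s0 a \<longleftrightarrow>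
     a \<in> adm_plans A p \<zeta> x0 s0 \<and>
     (\<forall>h\<in>hists s0. \<forall>i. cont_value \<beta> P (path_fun \<zeta> a x0 (g i)) h \<ge> gbar i)"

fun post_hist :: "('s list \<Rightarrow> 'a) \<Rightarrow> 's list \<Rightarrow> ('s \<times> 'a) list" where
  "post_hist a [] = []"
| "post_hist a (s # h) = (s, a (s # h)) # post_hist a h"

definition posthists :: "'a set \<Rightarrow> 's \<Rightarrow> nat \<Rightarrow> ('s \<times> 'a) list set" where
  "posthists A s0 t = {ht. length ht = Suc t \<and> last (map fst ht) = s0 \<and> set (map snd ht) \<subseteq> A}"

definition Lambda_set :: "real \<Rightarrow> ('s::finite \<Rightarrow> 's \<Rightarrow> real) \<Rightarrow> 'a set \<Rightarrow> 's
    \<Rightarrow> ('i::finite \<Rightarrow> ('s \<times> 'a) list \<Rightarrow> real) set" where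
  "Lambda_set \<beta> P A s0 =
     {lam. (\<forall>i ht. 0 \<le> lam i ht) \<and>
          summable (\<lambda>t. \<Sum>ht\<in>posthists A s0 t. \<Sum>i\<in>UNIV. \<beta> ^ t * lam i ht * path_prob P (map fst ht))}"

text \<open>The Lagrangian tilde L(a, lambda; gamma, x_0, s_0); the inner future sum is
  taken in conditional expectation given s^t (tower property).\<close>
definition Lagr ::
  "real \<Rightarrow> ('s::finite \<Rightarrow> 's \<Rightarrow> real) \<Rightarrow> ('x \<Rightarrow> 'a \<Rightarrow> 's \<Rightarrow> 'x) \<Rightarrow> ('x \<Rightarrow> 'a \<Rightarrow> 's \<Rightarrow> real)
   \<Rightarrow> ('i::finite \<Rightarrow> 'x \<Rightarrow> 'a \<Rightarrow> 's \<Rightarrow> real) \<Rightarrow> ('i \<Rightarrow> real)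
   \<Rightarrow> ('s list \<Rightarrow> 'a) \<Rightarrow> ('i \<Rightarrow> ('s \<times> 'a) list \<Rightarrow> real) \<Rightarrow> real^'i \<Rightarrow> 'x \<Rightarrow> 's \<Rightarrow> real" where
  "Lagr \<beta> P \<zeta> r g gbar a lam \<gamma> x0 s0 =
     cont_value \<beta> P
       (\<lambda>h. path_fun \<zeta> a x0 r h + (\<Sum>i\<in>UNIV. \<gamma> $ i * path_fun \<zeta> a x0 (g i) h)
            + (\<Sum>i\<in>UNIV. lam i (post_hist a h) * (cont_value \<beta> P (path_fun \<zeta> a x0 (g i)) h - gbar i)))
       [s0]"

definition D_tilde ::
  "real \<Rightarrow> ('s::finite \<Rightarrow> 's \<Rightarrow> real) \<Rightarrow> 'a set \<Rightarrow> ('x \<Rightarrow> 'a \<Rightarrow> 's \<Rightarrow> real) \<Rightarrow> ('x \<Rightarrow> 'a \<Rightarrow> 's \<Rightarrow> 'x)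
   \<Rightarrow> ('x \<Rightarrow> 'a \<Rightarrow> 's \<Rightarrow> real) \<Rightarrow> ('i::finite \<Rightarrow> 'x \<Rightarrow> 'a \<Rightarrow> 's \<Rightarrow> real) \<Rightarrow> ('i \<Rightarrow> real)
   \<Rightarrow> real^'i \<Rightarrow> 'x \<Rightarrow> 's \<Rightarrow> ereal" where
  "D_tilde \<beta> P A p \<zeta> r g gbar \<gamma> x0 s0 =
     (INF lam\<in>Lambda_set \<beta> P A s0. SUP a\<in>adm_plans A p \<zeta> x0 s0.
        ereal (Lagr \<beta> P \<zeta> r g gbar a lam \<gamma> x0 s0))"

definition nonneg_orthant :: "(real^'i::finite) set" where
  "nonneg_orthant = {\<gamma>. \<forall>i. 0 \<le> \<gamma> $ i}"

definition Bk :: "real \<Rightarrow> (real^'i::finite) set" where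
  "Bk k = {\<gamma>. \<forall>i. 0 \<le> \<gamma> $ i \<and> \<gamma> $ i \<le> k}"

definition supnorm :: "'x set \<Rightarrow> 'a set \<Rightarrow> ('x \<Rightarrow> 'a \<Rightarrow> 's \<Rightarrow> real) \<Rightarrow> real" where
  "supnorm X A f = (SUP z\<in>X \<times> A \<times> UNIV. \<bar>f (fst z) (fst (snd z)) (snd (snd z))\<bar>)"

definition Lconst :: "real \<Rightarrow> 'x set \<Rightarrow> 'a set \<Rightarrow> ('x \<Rightarrow> 'a \<Rightarrow> 's \<Rightarrow> real)
   \<Rightarrow> ('i::finite \<Rightarrow> 'x \<Rightarrow> 'a \<Rightarrow> 's \<Rightarrow> real) \<Rightarrow> real" where
  "Lconst \<beta> X A r g = (supnorm X A r + (\<Sum>i\<in>UNIV. supnorm X A (g i))) / (1 - \<beta>)"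

definition Linf_norm :: "real \<Rightarrow> (real^'i::finite \<Rightarrow> real) \<Rightarrow> ereal" where
  "Linf_norm k f = esssup (restrict_space lebesgue (Bk k)) (\<lambda>\<gamma>. ereal \<bar>f \<gamma>\<bar>)"

definition enum_index :: "'x set \<Rightarrow> nat set" where
  "enum_index X = (if finite X then {1..card X} else {1..})"

definition Mnorm :: "'x set \<Rightarrow> (nat \<Rightarrow> 's::finite) \<Rightarrow> (nat \<Rightarrow> 'x)
    \<Rightarrow> (real^'i::finite \<Rightarrow> 'x \<Rightarrow> 's \<Rightarrow> real) \<Rightarrow> ennreal" where
  "Mnorm X senum xenum F =
     (\<Sum>i\<in>{1..CARD('s)}. ennreal ((1/2) ^ i) *
        (\<Sum>j. (if j \<in> enum_index X then ennreal ((1/2) ^ j) else 0) *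
           (\<Sum>k. ennreal ((1/2) ^ Suc k) *
              e2ennreal (Linf_norm (real (Suc k)) (\<lambda>\<gamma>. F \<gamma> (xenum j) (senum i))))))"

definition Mspace :: "'x set \<Rightarrow> (nat \<Rightarrow> 's::finite) \<Rightarrow> (nat \<Rightarrow> 'x)
    \<Rightarrow> (real^'i::finite \<Rightarrow> 'x \<Rightarrow> 's \<Rightarrow> real) set" where
  "Mspace X senum xenum =
     {F. (\<forall>x\<in>X. \<forall>s. \<forall>k::nat. k \<ge> 1 \<longrightarrow> Linf_norm (real k) (\<lambda>\<gamma>. F \<gamma> x s) < \<infinity>)
         \<and> Mnorm X senum xenum F < \<infinity>}"

definition Nspace ::
  "real \<Rightarrow> ('s::finite \<Rightarrow> 's \<Rightarrow> real) \<Rightarrow> 'a set \<Rightarrow> 'x set \<Rightarrow> ('x \<Rightarrow> 'a \<Rightarrow> 's \<Rightarrow> real) \<Rightarrow> ('x \<Rightarrow> 'a \<Rightarrow> 's \<Rightarrow> 'x)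
   \<Rightarrow> ('x \<Rightarrow> 'a \<Rightarrow> 's \<Rightarrow> real) \<Rightarrow> ('i::finite \<Rightarrow> 'x \<Rightarrow> 'a \<Rightarrow> 's \<Rightarrow> real) \<Rightarrow> ('i \<Rightarrow> real)
   \<Rightarrow> (nat \<Rightarrow> 's) \<Rightarrow> (nat \<Rightarrow> 'x) \<Rightarrow> (real^'i \<Rightarrow> 'x \<Rightarrow> 's \<Rightarrow> real) set" where
  "Nspace \<beta> P A X p \<zeta> r g gbar senum xenum =
     {F \<in> Mspace X senum xenum. \<forall>x\<in>X. \<forall>s.
        convex_on nonneg_orthant (\<lambda>\<gamma>. F \<gamma> x s)
      \<and> (\<forall>\<gamma>1\<in>nonneg_orthant. \<forall>\<gamma>2\<in>nonneg_orthant.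
           \<bar>F \<gamma>1 x s - F \<gamma>2 x s\<bar> \<le> Lconst \<beta> X A r g * (\<Sum>i\<in>UNIV. \<bar>\<gamma>1 $ i - \<gamma>2 $ i\<bar>))
      \<and> (\<forall>a. feasible \<beta> P A p \<zeta> g gbar x s a \<longrightarrow> (\<forall>\<gamma>\<in>nonneg_orthant.
           F \<gamma> x s \<ge> cont_value \<beta> P (path_fun \<zeta> a x r) [s]
                      + (\<Sum>i\<in>UNIV. \<gamma> $ i * cont_value \<beta> P (path_fun \<zeta> a x (g i)) [s])))
      \<and> (\<forall>\<gamma>\<in>nonneg_orthant. F \<gamma> x s \<le> (1 + (\<Sum>i\<in>UNIV. \<gamma> $ i)) * Lconst \<beta> X A r g)}"

definition bellman_rhs ::
  "real \<Rightarrow> ('s::finite \<Rightarrow> 's \<Rightarrow> real) \<Rightarrow> 'a set \<Rightarrow> ('x \<Rightarrow> 'a \<Rightarrow> 's \<Rightarrow> real) \<Rightarrow> ('x \<Rightarrow> 'a \<Rightarrow> 's \<Rightarrow> 'x)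
   \<Rightarrow> ('x \<Rightarrow> 'a \<Rightarrow> 's \<Rightarrow> real) \<Rightarrow> ('i::finite \<Rightarrow> 'x \<Rightarrow> 'a \<Rightarrow> 's \<Rightarrow> real) \<Rightarrow> ('i \<Rightarrow> real)
   \<Rightarrow> (real^'i \<Rightarrow> 'x \<Rightarrow> 's \<Rightarrow> real) \<Rightarrow> real^'i \<Rightarrow> 'x \<Rightarrow> 's \<Rightarrow> ereal" where
  "bellman_rhs \<beta> P A p \<zeta> r g gbar F \<gamma> x s =
     (SUP a\<in>A_tilde A p x s. INF lam\<in>nonneg_orthant.
        ereal (r x a s + (\<Sum>i\<in>UNIV. \<gamma> $ i * g i x a s + lam $ i * (g i x a s - gbar i))
               + \<beta> * (\<Sum>s'\<in>UNIV. P s s' * F (\<gamma> + lam) (\<zeta> x a s) s')))"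

end

theory Submission
  imports Defs
begin

text \<open>The right-hand side of the functional equation defines a monotone operator that
  maps functions squeezed between the payoffs of feasible plans and the bound (1 + sum gamma) L
  into themselves and preserves convexity and the L-Lipschitz bound in gamma: the objective is
  jointly convex and uniformly Lipschitz in (gamma, lambda), and the infimum over lambda and the
  maximum over the finitely many actions keep both properties. Iterating from the upper bound gives
  a decreasing sequence whose limit is a fixed point, because with finitely many actions a strict
  inequality for the limit would already hold for some iterate. Lipschitz continuity gives
  measurability, and the upper bound gives linear growth of the L^infty norms on the boxes B(k),
  hence a finite M-norm.

  Given a solution F and multipliers lambda in tilde Lambda, play at every history a
  maximiser of the right-hand side at the current state and at the multiplier obtained by adding
  up lambda along the history. The gap between F and the Lagrangian value of this plan from the
  current history on satisfies gap_t <= beta E_t gap_(t+1), and it grows at most like the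
  accumulated multipliers, whose discounted expectations are summable by definition of tilde Lambda.
  Telescoping makes the initial gap nonpositive, so F is below the Lagrangian of that plan and
  hence below tilde D.\<close>

section \<open>Conditional expectations along histories\<close>

definition cond_exp :: "('s::finite \<Rightarrow> 's \<Rightarrow> real) \<Rightarrow> 's list \<Rightarrow> nat \<Rightarrow> ('s list \<Rightarrow> real) \<Rightarrow> real" where
  "cond_exp P h n f = (\<Sum>e\<in>{e::'s list. length e = n}. ext_prob P e h * f (e @ h))"

lemma finite_lists_of_length: "finite {e::'s::finite list. length e = n}"
  using finite_lists_length_eq[of "UNIV::'s set" n] by simp

lemma cont_value_eq_suminf: "cont_value \<beta> P f h = (\<Sum>n. \<beta> ^ n * cond_exp P h n f)"
  unfolding cont_value_def cond_exp_def ..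

lemma cond_exp_0 [simp]: "cond_exp P h 0 f = f h"
  unfolding cond_exp_def by simp

lemma cond_exp_Suc_last:
  fixes P :: "'s::finite \<Rightarrow> 's \<Rightarrow> real"
  shows "cond_exp P h (Suc n) f = cond_exp P h n (\<lambda>k. \<Sum>s'\<in>UNIV. P (hd k) s' * f (s' # k))"
proof -
  have lists_Suc: "{e::'s list. length e = Suc n} = (\<lambda>(s, e). s # e) ` (UNIV \<times> {e. length e = n})"
    by (auto simp: length_Suc_conv image_iff)
  have inj: "inj_on (\<lambda>(s, e). s # e) (UNIV \<times> {e::'s list. length e = n})"
    by (auto simp: inj_on_def)
  have "cond_exp P h (Suc n) f
      = (\<Sum>s'\<in>UNIV. \<Sum>e\<in>{e::'s list. length e = n}. ext_prob P (s' # e) h * f ((s' # e) @ h))"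
    unfolding cond_exp_def lists_Suc sum.reindex[OF inj] sum.cartesian_product
    by (simp add: case_prod_beta)
  also have "\<dots> = cond_exp P h n (\<lambda>k. \<Sum>s'\<in>UNIV. P (hd k) s' * f (s' # k))"
    unfolding cond_exp_def by (subst sum.swap) (simp add: sum_distrib_left mult_ac)
  finally show ?thesis .
qed

lemma cond_exp_Suc: "cond_exp P h (Suc n) f = (\<Sum>s'\<in>UNIV. P (hd h) s' * cond_exp P (s' # h) n f)"
proof (induction n arbitrary: f)
  case 0
  then show ?case by (simp add: cond_exp_Suc_last)
next
  case (Suc n)
  then show ?case by (subst (1 2) cond_exp_Suc_last) simp
qed

lemma cond_exp_tower: "cond_exp P h m (\<lambda>k. cond_exp P k n f) = cond_exp P h (m + n) f"
  by (induction m arbitrary: h) (simp_all add: cond_exp_Suc)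

lemma cond_exp_add: "cond_exp P h n (\<lambda>k. f k + g k) = cond_exp P h n f + cond_exp P h n g"
  unfolding cond_exp_def by (simp add: distrib_left sum.distrib)

lemma cond_exp_cmult: "cond_exp P h n (\<lambda>k. c * f k) = c * cond_exp P h n f"
  unfolding cond_exp_def by (simp add: sum_distrib_left mult_ac)

lemma cond_exp_sum: "cond_exp P h n (\<lambda>k. \<Sum>i\<in>I. f i k) = (\<Sum>i\<in>I. cond_exp P h n (f i))"
  unfolding cond_exp_def by (simp add: sum_distrib_left sum.swap[of _ I])

lemma cond_exp_cong:
  "(\<And>e. length e = n \<Longrightarrow> f (e @ h) = g (e @ h)) \<Longrightarrow> cond_exp P h n f = cond_exp P h n g"
  unfolding cond_exp_def by (rule sum.cong) auto

lemma ext_prob_cong_hd: "hd h = hd h' \<Longrightarrow> ext_prob P e h = ext_prob P e h'"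
  by (induction e) (auto simp: hd_append)

locale discounted_chain =
  fixes P :: "'s::finite \<Rightarrow> 's \<Rightarrow> real" and \<beta> :: real
  assumes P_pos: "\<And>s s'. P s s' > 0"
    and P_sum: "\<And>s. (\<Sum>s'\<in>UNIV. P s s') = 1"
    and \<beta>_pos: "0 < \<beta>" and \<beta>_less_1: "\<beta> < 1"
begin

lemma P_nonneg: "0 \<le> P s s'"
  using P_pos[of s s'] by simp

lemma next_exp_le: "(\<And>s'. f s' \<le> c) \<Longrightarrow> (\<Sum>s'\<in>UNIV. P s s' * f s') \<le> c"
  using sum_mono[of UNIV "\<lambda>s'. P s s' * f s'" "\<lambda>s'. P s s' * c"]
  by (simp add: mult_left_mono P_nonneg sum_distrib_right[symmetric] P_sum)

lemma ext_prob_pos: "0 < ext_prob P e h"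
  by (induction e) (auto intro!: mult_pos_pos P_pos)

lemma ext_prob_nonneg: "0 \<le> ext_prob P e h"
  using ext_prob_pos[of e h] by simp

lemma cond_exp_const: "cond_exp P h n (\<lambda>k. c) = c"
  by (induction n) (simp_all add: cond_exp_Suc_last sum_distrib_right[symmetric] P_sum)

lemma cond_exp_mono:
  "(\<And>e. length e = n \<Longrightarrow> f (e @ h) \<le> g (e @ h)) \<Longrightarrow> cond_exp P h n f \<le> cond_exp P h n g"
  unfolding cond_exp_def by (rule sum_mono) (auto intro!: mult_left_mono ext_prob_nonneg)

lemma cond_exp_nonneg: "(\<And>e. length e = n \<Longrightarrow> 0 \<le> f (e @ h)) \<Longrightarrow> 0 \<le> cond_exp P h n f"
  using cond_exp_mono[of n "\<lambda>_. 0" h f] by (simp add: cond_exp_const)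

lemma cond_exp_abs_le: "\<bar>cond_exp P h n f\<bar> \<le> cond_exp P h n (\<lambda>k. \<bar>f k\<bar>)"
  unfolding cond_exp_def by (rule order_trans[OF sum_abs]) (simp add: abs_mult ext_prob_nonneg)

lemma cond_exp_abs_bound:
  "(\<And>e. length e = n \<Longrightarrow> \<bar>f (e @ h)\<bar> \<le> B) \<Longrightarrow> \<bar>cond_exp P h n f\<bar> \<le> B"
  using cond_exp_abs_le[of h n f] cond_exp_mono[of n "\<lambda>k. \<bar>f k\<bar>" h "\<lambda>_. B"]
  by (simp add: cond_exp_const)

lemma ext_prob_mult_le_cond_exp:
  assumes "length e = n" and "\<And>e. length e = n \<Longrightarrow> 0 \<le> f (e @ h)"
  shows "ext_prob P e h * f (e @ h) \<le> cond_exp P h n f"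
  unfolding cond_exp_def
  by (rule member_le_sum[where f = "\<lambda>e. ext_prob P e h * f (e @ h)"])
     (use assms finite_lists_of_length in \<open>auto intro!: mult_nonneg_nonneg ext_prob_nonneg\<close>)

definition disc_summable :: "'s list \<Rightarrow> ('s list \<Rightarrow> real) \<Rightarrow> bool" where
  "disc_summable h f \<longleftrightarrow> summable (\<lambda>n. \<beta> ^ n * cond_exp P h n f)"

lemma disc_summable_bounded:
  assumes "\<And>e. \<bar>f (e @ h)\<bar> \<le> B"
  shows "disc_summable h f"
  unfolding disc_summable_def
proof (rule summable_comparison_test)
  show "\<exists>N. \<forall>n\<ge>N. norm (\<beta> ^ n * cond_exp P h n f) \<le> B * \<beta> ^ n"
    using cond_exp_abs_bound[of _ f h B] assms \<beta>_pos by (auto simp: abs_mult mult.commute mult_left_mono)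
  show "summable (\<lambda>n. B * \<beta> ^ n)"
    using \<beta>_pos \<beta>_less_1 by (intro summable_mult summable_geometric) simp
qed

lemma cont_value_abs_le_suminf:
  assumes "summable (\<lambda>n. \<beta> ^ n * b n)" and "\<And>n. \<bar>cond_exp P h n f\<bar> \<le> b n"
  shows "\<bar>cont_value \<beta> P f h\<bar> \<le> (\<Sum>n. \<beta> ^ n * b n)"
proof -
  have le: "\<bar>\<beta> ^ n * cond_exp P h n f\<bar> \<le> \<beta> ^ n * b n" for n
    using assms(2)[of n] \<beta>_pos by (simp add: abs_mult mult_left_mono)
  have sa: "summable (\<lambda>n. \<bar>\<beta> ^ n * cond_exp P h n f\<bar>)"
    by (rule summable_comparison_test[OF _ assms(1)]) (use le in auto)
  have "\<bar>cont_value \<beta> P f h\<bar> \<le> (\<Sum>n. \<bar>\<beta> ^ n * cond_exp P h n f\<bar>)"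
    unfolding cont_value_eq_suminf by (rule summable_rabs[OF sa])
  also have "\<dots> \<le> (\<Sum>n. \<beta> ^ n * b n)"
    by (rule suminf_le[OF le sa assms(1)])
  finally show ?thesis .
qed

lemma cont_value_abs_bound:
  assumes "\<And>e. \<bar>f (e @ h)\<bar> \<le> B"
  shows "\<bar>cont_value \<beta> P f h\<bar> \<le> B / (1 - \<beta>)"
proof -
  have "(\<lambda>n. \<beta> ^ n * B) sums (B / (1 - \<beta>))"
    using \<beta>_pos \<beta>_less_1 sums_mult2[OF geometric_sums[of \<beta>], of B] by simp
  with cont_value_abs_le_suminf[of "\<lambda>_. B"] cond_exp_abs_bound[of _ f h B] assms
  show ?thesis by (auto simp: sums_iff)
qed

lemma disc_summable_dominated:
  assumes g: "disc_summable h g" and le: "\<And>e. \<bar>f (e @ h)\<bar> \<le> g (e @ h)"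
  shows "disc_summable h f"
  unfolding disc_summable_def
proof (rule summable_comparison_test[OF _ g[unfolded disc_summable_def]])
  have "\<bar>cond_exp P h n f\<bar> \<le> cond_exp P h n g" for n
    using cond_exp_abs_le[of h n f] cond_exp_mono[of n "\<lambda>k. \<bar>f k\<bar>" h g] le by fastforce
  then show "\<exists>N. \<forall>n\<ge>N. norm (\<beta> ^ n * cond_exp P h n f) \<le> \<beta> ^ n * cond_exp P h n g"
    using \<beta>_pos by (auto simp: abs_mult mult_left_mono)
qed

lemma cont_value_abs_le_dominated:
  assumes g: "disc_summable h g" and le: "\<And>e. \<bar>f (e @ h)\<bar> \<le> g (e @ h)"
  shows "\<bar>cont_value \<beta> P f h\<bar> \<le> cont_value \<beta> P g h"
  unfolding cont_value_eq_suminf[of _ _ g]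
proof (rule cont_value_abs_le_suminf)
  show "summable (\<lambda>n. \<beta> ^ n * cond_exp P h n g)"
    using g unfolding disc_summable_def .
  show "\<bar>cond_exp P h n f\<bar> \<le> cond_exp P h n g" for n
    using cond_exp_abs_le[of h n f] cond_exp_mono[of n "\<lambda>k. \<bar>f k\<bar>" h g] le by fastforce
qed

lemma cont_value_rec:
  assumes "\<And>s'. disc_summable (s' # h) f"
  shows "cont_value \<beta> P f h = f h + \<beta> * (\<Sum>s'\<in>UNIV. P (hd h) s' * cont_value \<beta> P f (s' # h))"
proof -
  define a where "a n = \<beta> ^ n * cond_exp P h n f" for n
  define b where "b s' n = P (hd h) s' * (\<beta> ^ n * cond_exp P (s' # h) n f)" for s' n
  have a_Suc: "a (Suc n) = \<beta> * (\<Sum>s'\<in>UNIV. b s' n)" for n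
    unfolding a_def b_def cond_exp_Suc by (simp add: sum_distrib_left mult_ac)
  have b: "summable (b s')" for s'
    using assms unfolding disc_summable_def b_def by (intro summable_mult) auto
  have "summable (\<lambda>n. a (Suc n))"
    unfolding a_Suc by (intro summable_mult summable_sum b)
  then have "cont_value \<beta> P f h = a 0 + (\<Sum>n. a (Suc n))"
    unfolding cont_value_eq_suminf a_def[symmetric] by (simp add: suminf_split_head summable_Suc_iff)
  also have "(\<Sum>n. a (Suc n)) = \<beta> * (\<Sum>s'\<in>UNIV. \<Sum>n. b s' n)"
    unfolding a_Suc by (simp add: suminf_mult summable_sum b suminf_sum)
  also have "(\<Sum>s'\<in>UNIV. \<Sum>n. b s' n) = (\<Sum>s'\<in>UNIV. P (hd h) s' * cont_value \<beta> P f (s' # h))"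
    using assms unfolding cont_value_eq_suminf b_def disc_summable_def by (simp add: suminf_mult)
  finally show ?thesis by (simp add: a_def)
qed

lemma disc_summable_add: "disc_summable h f \<Longrightarrow> disc_summable h g \<Longrightarrow> disc_summable h (\<lambda>k. f k + g k)"
  unfolding disc_summable_def cond_exp_add by (simp add: distrib_left summable_add)

lemma disc_summable_cmult: "disc_summable h f \<Longrightarrow> disc_summable h (\<lambda>k. c * f k)"
  unfolding disc_summable_def cond_exp_cmult using summable_mult[of _ c] by (simp add: mult_ac)

lemma disc_summable_sum:
  "(\<And>i. i \<in> I \<Longrightarrow> disc_summable h (f i)) \<Longrightarrow> disc_summable h (\<lambda>k. \<Sum>i\<in>I. f i k)"
  unfolding disc_summable_def cond_exp_sum by (simp add: sum_distrib_left summable_sum)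

lemma cont_value_add:
  "disc_summable h f \<Longrightarrow> disc_summable h g \<Longrightarrow>
    cont_value \<beta> P (\<lambda>k. f k + g k) h = cont_value \<beta> P f h + cont_value \<beta> P g h"
  unfolding disc_summable_def cont_value_eq_suminf cond_exp_add by (simp add: distrib_left suminf_add)

lemma cont_value_cmult: "disc_summable h f \<Longrightarrow> cont_value \<beta> P (\<lambda>k. c * f k) h = c * cont_value \<beta> P f h"
  unfolding disc_summable_def cont_value_eq_suminf cond_exp_cmult by (simp add: suminf_mult[symmetric] mult_ac)

lemma cont_value_sum:
  "(\<And>i. i \<in> I \<Longrightarrow> disc_summable h (f i)) \<Longrightarrow>
    cont_value \<beta> P (\<lambda>k. \<Sum>i\<in>I. f i k) h = (\<Sum>i\<in>I. cont_value \<beta> P (f i) h)"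
  unfolding disc_summable_def cont_value_eq_suminf cond_exp_sum by (simp add: sum_distrib_left suminf_sum)

end

section \<open>Histories and plans\<close>

lemma hists_singleton [simp]: "[s0] \<in> hists s0"
  by (simp add: hists_def)

lemma hists_Cons: "k \<in> hists s0 \<Longrightarrow> s # k \<in> hists s0"
  by (simp add: hists_def)

lemma hists_append: "k \<in> hists s0 \<Longrightarrow> e @ k \<in> hists s0"
  by (simp add: hists_def)

lemma hists_nonempty: "k \<in> hists s0 \<Longrightarrow> k \<noteq> []"
  by (simp add: hists_def)

lemma hists_eq_append: "k \<in> hists s0 \<Longrightarrow> k = butlast k @ [s0]"
  unfolding hists_def using append_butlast_last_id[of k] by simp

lemma hists_induct [consumes 1, case_names singleton Cons]:
  assumes "k \<in> hists s0"
    and "Q [s0]"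
    and "\<And>s k. k \<in> hists s0 \<Longrightarrow> Q k \<Longrightarrow> Q (s # k)"
  shows "Q k"
  using assms(1)
proof (induction k)
  case (Cons s k)
  show ?case
  proof (cases "k = []")
    case True
    with Cons.prems assms(2) show ?thesis by (simp add: hists_def)
  next
    case False
    with Cons assms(3) show ?thesis by (simp add: hists_def)
  qed
qed (simp add: hists_def)

lemma state_path_Cons:
  "k \<noteq> [] \<Longrightarrow> state_path \<zeta> a x0 (s # k) = \<zeta> (state_path \<zeta> a x0 k) (a k) (hd k)"
  by (cases k) auto

lemma state_path_in:
  assumes "a \<in> adm_plans A p \<zeta> x0 s0" "x0 \<in> X" "\<And>x b s. x \<in> X \<Longrightarrow> b \<in> A \<Longrightarrow> \<zeta> x b s \<in> X"
    and "k \<in> hists s0"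
  shows "state_path \<zeta> a x0 k \<in> X \<and> a k \<in> A"
  using assms(4)
proof (induction rule: hists_induct)
  case singleton
  then show ?case using assms(1,2) unfolding adm_plans_def A_tilde_def by auto
next
  case (Cons s k)
  then show ?case
    using assms(1,3) hists_Cons[OF Cons(1)] hists_nonempty[OF Cons(1)]
    by (auto simp: state_path_Cons adm_plans_def A_tilde_def)
qed

text \<open>Histories are stored newest first, so the continuation of a plan \<open>a\<close> after the first
  period, with initial shock \<open>s\<close>, is \<open>\<lambda>k. a (k @ [s])\<close>.\<close>

lemma state_path_shift:
  "k \<noteq> [] \<Longrightarrow> state_path \<zeta> a x (k @ [s]) = state_path \<zeta> (\<lambda>k'. a (k' @ [s])) (\<zeta> x (a [s]) s) k"
proof (induction k)
  case (Cons s1 k)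
  then show ?case by (cases k) simp_all
qed simp

lemma path_fun_shift:
  "k \<noteq> [] \<Longrightarrow> path_fun \<zeta> a x f (k @ [s]) = path_fun \<zeta> (\<lambda>k'. a (k' @ [s])) (\<zeta> x (a [s]) s) f k"
  unfolding path_fun_def by (simp add: state_path_shift hd_append)

lemma cont_value_shift:
  "h \<noteq> [] \<Longrightarrow>
    cont_value \<beta> P (path_fun \<zeta> a x f) (h @ [s])
    = cont_value \<beta> P (path_fun \<zeta> (\<lambda>k'. a (k' @ [s])) (\<zeta> x (a [s]) s) f) h"
  unfolding cont_value_def
  by (intro arg_cong[where f = suminf] ext arg_cong2[where f = "(*)"] refl sum.cong)
     (auto simp: path_fun_shift[symmetric] ext_prob_cong_hd[of "h @ [s]" h] hd_append)

lemma adm_plans_shift: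
  assumes "a \<in> adm_plans A p \<zeta> x s"
  shows "(\<lambda>k. a (k @ [s])) \<in> adm_plans A p \<zeta> (\<zeta> x (a [s]) s) s'"
  unfolding adm_plans_def
proof (intro CollectI ballI)
  fix h assume "h \<in> hists s'"
  then have "h @ [s] \<in> hists s" "h \<noteq> []" by (auto simp: hists_def)
  then show "a (h @ [s]) \<in> A_tilde A p (state_path \<zeta> (\<lambda>k. a (k @ [s])) (\<zeta> x (a [s]) s) h) (hd h)"
    using assms state_path_shift[of h \<zeta> a x s] unfolding adm_plans_def by (auto simp: hd_append)
qed

lemma feasible_adm_plans: "feasible \<beta> P A p \<zeta> g gbar x s a \<Longrightarrow> a \<in> adm_plans A p \<zeta> x s"
  by (simp add: feasible_def)

lemma feasible_first_action: "feasible \<beta> P A p \<zeta> g gbar x s a \<Longrightarrow> a [s] \<in> A_tilde A p x s"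
proof -
  assume "feasible \<beta> P A p \<zeta> g gbar x s a"
  then have "\<forall>h\<in>hists s. a h \<in> A_tilde A p (state_path \<zeta> a x h) (hd h)"
    unfolding feasible_def adm_plans_def by simp
  from bspec[OF this hists_singleton] show ?thesis by simp
qed

lemma feasible_shift:
  assumes "feasible \<beta> P A p \<zeta> g gbar x s a"
  shows "feasible \<beta> P A p \<zeta> g gbar (\<zeta> x (a [s]) s) s' (\<lambda>k. a (k @ [s]))"
  unfolding feasible_def
proof (intro conjI ballI allI)
  show "(\<lambda>k. a (k @ [s])) \<in> adm_plans A p \<zeta> (\<zeta> x (a [s]) s) s'"
    by (rule adm_plans_shift[OF feasible_adm_plans[OF assms]])
  fix h i assume "h \<in> hists s'"
  then have "h @ [s] \<in> hists s" "h \<noteq> []" by (auto simp: hists_def)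
  moreover from this(1) have "gbar i \<le> cont_value \<beta> P (path_fun \<zeta> a x (g i)) (h @ [s])"
    using assms unfolding feasible_def by blast
  ultimately show "gbar i \<le> cont_value \<beta> P (path_fun \<zeta> (\<lambda>k. a (k @ [s])) (\<zeta> x (a [s]) s) (g i)) h"
    using cont_value_shift[of h \<beta> P \<zeta> a x "g i" s] by simp
qed

lemma map_fst_post_hist: "map fst (post_hist a h) = h"
  by (induction h) auto

lemma length_post_hist: "length (post_hist a h) = length h"
  by (induction h) auto

section \<open>The constrained decision problem\<close>

definition bounded_fun :: "'x set \<Rightarrow> 'a set \<Rightarrow> ('x \<Rightarrow> 'a \<Rightarrow> 's \<Rightarrow> real) \<Rightarrow> bool" where
  "bounded_fun X A f \<longleftrightarrow> (\<exists>B. \<forall>x\<in>X. \<forall>a\<in>A. \<forall>s. \<bar>f x a s\<bar> \<le> B)"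

lemma supnorm_ge:
  assumes "bounded_fun X A f" "x \<in> X" "a \<in> A"
  shows "\<bar>f x a s\<bar> \<le> supnorm X A f"
proof -
  obtain B where "\<forall>x\<in>X. \<forall>a\<in>A. \<forall>s. \<bar>f x a s\<bar> \<le> B"
    using assms(1) by (auto simp: bounded_fun_def)
  then show ?thesis
    unfolding supnorm_def
    by (intro cSUP_upper2[where x = "(x, a, s)"]) (use assms in \<open>auto intro!: bdd_aboveI2[where M = B]\<close>)
qed

lemma supnorm_nonneg: "bounded_fun X A f \<Longrightarrow> x \<in> X \<Longrightarrow> a \<in> A \<Longrightarrow> 0 \<le> supnorm X A f"
  using supnorm_ge[of X A f x a] abs_ge_zero order_trans by blast

locale decision_model = discounted_chain P \<beta> for P :: "'s::finite \<Rightarrow> 's \<Rightarrow> real" and \<beta> :: real +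
  fixes A :: "'a set" and X :: "'x set" and \<zeta> :: "'x \<Rightarrow> 'a \<Rightarrow> 's \<Rightarrow> 'x"
    and p r :: "'x \<Rightarrow> 'a \<Rightarrow> 's \<Rightarrow> real" and g :: "'i::finite \<Rightarrow> 'x \<Rightarrow> 'a \<Rightarrow> 's \<Rightarrow> real"
    and gbar :: "'i \<Rightarrow> real"
  assumes A_finite: "finite A"
    and \<zeta>_in_X: "\<And>x a s. x \<in> X \<Longrightarrow> a \<in> A \<Longrightarrow> \<zeta> x a s \<in> X"
    and r_bounded: "bounded_fun X A r" and g_bounded: "\<And>i. bounded_fun X A (g i)"
    and standing: "\<And>x s. x \<in> X \<Longrightarrow> \<exists>a. feasible \<beta> P A p \<zeta> g gbar x s a"
    and X_nonempty: "X \<noteq> {}"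
begin

abbreviation "feas \<equiv> feasible \<beta> P A p \<zeta> g gbar"
abbreviation "sup_r \<equiv> supnorm X A r"
abbreviation "sup_g i \<equiv> supnorm X A (g i)"
abbreviation "L \<equiv> Lconst \<beta> X A r g"

lemma A_tilde_subset: "A_tilde A p x s \<subseteq> A"
  by (auto simp: A_tilde_def)

lemma finite_A_tilde: "finite (A_tilde A p x s)"
  using A_finite A_tilde_subset by (rule finite_subset[rotated])

lemma A_tilde_nonempty: "x \<in> X \<Longrightarrow> A_tilde A p x s \<noteq> {}"
  using standing[of x s] feasible_first_action[of \<beta> P A p \<zeta> g gbar x s] by blast

lemma A_nonempty: "A \<noteq> {}"
  using X_nonempty A_tilde_nonempty A_tilde_subset by blast

lemma sup_r_nonneg: "0 \<le> sup_r"
  using X_nonempty A_nonempty supnorm_nonneg[OF r_bounded] by blast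

lemma sup_g_nonneg: "0 \<le> sup_g i"
  using X_nonempty A_nonempty supnorm_nonneg[OF g_bounded] by blast

lemma L_nonneg: "0 \<le> L"
  unfolding Lconst_def using sup_r_nonneg sup_g_nonneg \<beta>_less_1
  by (auto intro!: divide_nonneg_pos sum_nonneg add_nonneg_nonneg)

lemma sup_r_le: "sup_r \<le> (1 - \<beta>) * L"
  unfolding Lconst_def using sup_g_nonneg \<beta>_less_1 by (simp add: sum_nonneg)

lemma sup_g_le: "sup_g i \<le> (1 - \<beta>) * L"
proof -
  have "sup_g i \<le> (\<Sum>j\<in>UNIV. sup_g j)"
    by (rule member_le_sum) (auto simp: sup_g_nonneg)
  then show ?thesis
    unfolding Lconst_def using sup_r_nonneg \<beta>_less_1 by simp
qed

lemma r_abs_le: "x \<in> X \<Longrightarrow> a \<in> A \<Longrightarrow> \<bar>r x a s\<bar> \<le> (1 - \<beta>) * L"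
  using supnorm_ge[OF r_bounded] sup_r_le order_trans by blast

lemma g_abs_le: "x \<in> X \<Longrightarrow> a \<in> A \<Longrightarrow> \<bar>g i x a s\<bar> \<le> (1 - \<beta>) * L"
  using supnorm_ge[OF g_bounded] sup_g_le order_trans by blast

lemma path_fun_abs_le:
  assumes "bounded_fun X A f" "a \<in> adm_plans A p \<zeta> x s" "x \<in> X" "k \<in> hists s"
  shows "\<bar>path_fun \<zeta> a x f (e @ k)\<bar> \<le> supnorm X A f"
  unfolding path_fun_def
  using state_path_in[OF assms(2,3) \<zeta>_in_X hists_append[OF assms(4)]] supnorm_ge[OF assms(1)] by blast

lemma cont_value_path_fun_abs_le:
  assumes "bounded_fun X A f" "a \<in> adm_plans A p \<zeta> x s" "x \<in> X" "k \<in> hists s"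
  shows "\<bar>cont_value \<beta> P (path_fun \<zeta> a x f) k\<bar> \<le> supnorm X A f / (1 - \<beta>)"
  by (rule cont_value_abs_bound) (rule path_fun_abs_le[OF assms])

lemma supnorm_div_le_L:
  assumes "supnorm X A f \<le> (1 - \<beta>) * L"
  shows "supnorm X A f / (1 - \<beta>) \<le> L"
  using assms \<beta>_less_1 by (simp add: divide_simps mult.commute)

definition plan_value :: "('x \<Rightarrow> 'a \<Rightarrow> 's \<Rightarrow> real) \<Rightarrow> ('s list \<Rightarrow> 'a) \<Rightarrow> 'x \<Rightarrow> 's \<Rightarrow> real" where
  "plan_value f a x s = cont_value \<beta> P (path_fun \<zeta> a x f) [s]"

lemma plan_value_r_abs_le: "a \<in> adm_plans A p \<zeta> x s \<Longrightarrow> x \<in> X \<Longrightarrow> \<bar>plan_value r a x s\<bar> \<le> L"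
  unfolding plan_value_def
  using cont_value_path_fun_abs_le[OF r_bounded _ _ hists_singleton] supnorm_div_le_L[OF sup_r_le]
  by (meson order_trans)

lemma plan_value_g_abs_le: "a \<in> adm_plans A p \<zeta> x s \<Longrightarrow> x \<in> X \<Longrightarrow> \<bar>plan_value (g i) a x s\<bar> \<le> L"
  unfolding plan_value_def
  using cont_value_path_fun_abs_le[OF g_bounded _ _ hists_singleton] supnorm_div_le_L[OF sup_g_le]
  by (meson order_trans)

lemma plan_value_rec:
  assumes "bounded_fun X A f" "feas x s a" "x \<in> X"
  shows "plan_value f a x s
    = f x (a [s]) s + \<beta> * (\<Sum>s'\<in>UNIV. P s s' * plan_value f (\<lambda>k. a (k @ [s])) (\<zeta> x (a [s]) s) s')"
proof -
  have "disc_summable [s', s] (path_fun \<zeta> a x f)" for s'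
    by (rule disc_summable_bounded, rule path_fun_abs_le[OF assms(1) feasible_adm_plans[OF assms(2)] assms(3)])
       (simp add: hists_def)
  then have "plan_value f a x s
      = path_fun \<zeta> a x f [s] + \<beta> * (\<Sum>s'\<in>UNIV. P s s' * cont_value \<beta> P (path_fun \<zeta> a x f) [s', s])"
    unfolding plan_value_def by (subst cont_value_rec) auto
  moreover have "cont_value \<beta> P (path_fun \<zeta> a x f) [s', s]
      = plan_value f (\<lambda>k. a (k @ [s])) (\<zeta> x (a [s]) s) s'" for s'
    using cont_value_shift[of "[s']" \<beta> P \<zeta> a x f s] by (simp add: plan_value_def)
  ultimately show ?thesis by (simp add: path_fun_def)
qed

lemma gbar_le_plan_value: "feas x s a \<Longrightarrow> gbar i \<le> plan_value (g i) a x s"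
  unfolding feasible_def plan_value_def by auto

definition plan_payoff :: "real^'i \<Rightarrow> ('s list \<Rightarrow> 'a) \<Rightarrow> 'x \<Rightarrow> 's \<Rightarrow> real" where
  "plan_payoff \<gamma> a x s = plan_value r a x s + (\<Sum>i\<in>UNIV. \<gamma> $ i * plan_value (g i) a x s)"

lemma plan_payoff_abs_le:
  assumes "a \<in> adm_plans A p \<zeta> x s" "x \<in> X" "\<gamma> \<in> nonneg_orthant"
  shows "\<bar>plan_payoff \<gamma> a x s\<bar> \<le> (1 + (\<Sum>i\<in>UNIV. \<gamma> $ i)) * L"
proof -
  have "\<bar>plan_payoff \<gamma> a x s\<bar> \<le> \<bar>plan_value r a x s\<bar> + (\<Sum>i\<in>UNIV. \<gamma> $ i * \<bar>plan_value (g i) a x s\<bar>)"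
    unfolding plan_payoff_def using assms(3)
    by (intro order_trans[OF abs_triangle_ineq] add_left_mono order_trans[OF sum_abs])
       (simp add: abs_mult nonneg_orthant_def)
  also have "\<dots> \<le> L + (\<Sum>i\<in>UNIV. \<gamma> $ i * L)"
    using assms plan_value_r_abs_le plan_value_g_abs_le
    by (intro add_mono sum_mono mult_left_mono) (auto simp: nonneg_orthant_def)
  finally show ?thesis by (simp add: algebra_simps sum_distrib_right)
qed

lemma plan_payoff_rec:
  assumes a: "feas x s a" and x: "x \<in> X"
  defines "x' \<equiv> \<zeta> x (a [s]) s" and "a' \<equiv> \<lambda>k. a (k @ [s])"
  shows "plan_payoff \<gamma> a x s + (\<Sum>i\<in>UNIV. lam $ i * (plan_value (g i) a x s - gbar i))
    = r x (a [s]) s + (\<Sum>i\<in>UNIV. \<gamma> $ i * g i x (a [s]) s + lam $ i * (g i x (a [s]) s - gbar i))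
      + \<beta> * (\<Sum>s'\<in>UNIV. P s s' * plan_payoff (\<gamma> + lam) a' x' s')"
proof -
  have Vr: "plan_value r a x s = r x (a [s]) s + \<beta> * (\<Sum>s'\<in>UNIV. P s s' * plan_value r a' x' s')"
    unfolding x'_def a'_def by (rule plan_value_rec[OF r_bounded a x])
  have Vg: "plan_value (g i) a x s = g i x (a [s]) s + \<beta> * (\<Sum>s'\<in>UNIV. P s s' * plan_value (g i) a' x' s')" for i
    unfolding x'_def a'_def by (rule plan_value_rec[OF g_bounded a x])
  define E where "E f = (\<Sum>s'\<in>UNIV. P s s' * plan_value f a' x' s')" for f
  have next_payoff: "(\<Sum>s'\<in>UNIV. P s s' * plan_payoff (\<gamma> + lam) a' x' s')
      = E r + (\<Sum>i\<in>UNIV. (\<gamma> $ i + lam $ i) * E (g i))"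
  proof -
    have "(\<Sum>s'\<in>UNIV. P s s' * (\<Sum>i\<in>UNIV. (\<gamma> $ i + lam $ i) * plan_value (g i) a' x' s'))
        = (\<Sum>i\<in>UNIV. (\<gamma> $ i + lam $ i) * E (g i))"
      unfolding E_def by (simp add: sum_distrib_left mult.left_commute) (rule sum.swap)
    then show ?thesis
      unfolding plan_payoff_def E_def by (simp add: distrib_left sum.distrib)
  qed
  have "plan_payoff \<gamma> a x s + (\<Sum>i\<in>UNIV. lam $ i * (plan_value (g i) a x s - gbar i))
      = plan_value r a x s
        + (\<Sum>i\<in>UNIV. \<gamma> $ i * plan_value (g i) a x s + lam $ i * (plan_value (g i) a x s - gbar i))"
    unfolding plan_payoff_def by (simp add: sum.distrib)
  also have "\<dots> = r x (a [s]) s + \<beta> * E r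
      + (\<Sum>i\<in>UNIV. (\<gamma> $ i * g i x (a [s]) s + lam $ i * (g i x (a [s]) s - gbar i))
                  + \<beta> * ((\<gamma> $ i + lam $ i) * E (g i)))"
    unfolding Vr Vg E_def by (simp add: algebra_simps)
  also have "\<dots> = r x (a [s]) s + (\<Sum>i\<in>UNIV. \<gamma> $ i * g i x (a [s]) s + lam $ i * (g i x (a [s]) s - gbar i))
      + \<beta> * (\<Sum>s'\<in>UNIV. P s s' * plan_payoff (\<gamma> + lam) a' x' s')"
    unfolding next_payoff by (simp add: sum.distrib sum_distrib_left distrib_left)
  finally show ?thesis .
qed

end

section \<open>The Bellman operator\<close>

lemma mem_nonneg_orthant: "\<gamma> \<in> nonneg_orthant \<longleftrightarrow> (\<forall>i. 0 \<le> \<gamma> $ i)"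
  by (simp add: nonneg_orthant_def)

lemma nonneg_orthant_add: "\<gamma> \<in> nonneg_orthant \<Longrightarrow> \<mu> \<in> nonneg_orthant \<Longrightarrow> \<gamma> + \<mu> \<in> nonneg_orthant"
  by (simp add: mem_nonneg_orthant)

lemma zero_in_nonneg_orthant: "0 \<in> nonneg_orthant"
  by (simp add: mem_nonneg_orthant)

lemma convex_nonneg_orthant: "convex nonneg_orthant"
  unfolding convex_def by (auto simp: mem_nonneg_orthant)

context decision_model
begin

definition bellman_obj ::
  "(real^'i \<Rightarrow> 'x \<Rightarrow> 's \<Rightarrow> real) \<Rightarrow> real^'i \<Rightarrow> 'x \<Rightarrow> 's \<Rightarrow> 'a \<Rightarrow> real^'i \<Rightarrow> real" where
  "bellman_obj F \<gamma> x s a lam = r x a s + (\<Sum>i\<in>UNIV. \<gamma> $ i * g i x a s + lam $ i * (g i x a s - gbar i))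
     + \<beta> * (\<Sum>s'\<in>UNIV. P s s' * F (\<gamma> + lam) (\<zeta> x a s) s')"

abbreviation "rhs \<equiv> bellman_rhs \<beta> P A p \<zeta> r g gbar"

lemma rhs_eq: "rhs F \<gamma> x s = (SUP a\<in>A_tilde A p x s. INF lam\<in>nonneg_orthant. ereal (bellman_obj F \<gamma> x s a lam))"
  unfolding bellman_rhs_def bellman_obj_def ..

definition upper_bound :: "real^'i \<Rightarrow> 'x \<Rightarrow> 's \<Rightarrow> real" where
  "upper_bound \<gamma> x s = (1 + (\<Sum>i\<in>UNIV. \<gamma> $ i)) * L"

definition sandwiched :: "(real^'i \<Rightarrow> 'x \<Rightarrow> 's \<Rightarrow> real) \<Rightarrow> bool" where
  "sandwiched F \<longleftrightarrow> (\<forall>x\<in>X. \<forall>s. \<forall>\<gamma>\<in>nonneg_orthant. F \<gamma> x s \<le> upper_bound \<gamma> x s \<and>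
      (\<forall>a. feas x s a \<longrightarrow> plan_payoff \<gamma> a x s \<le> F \<gamma> x s))"

lemma sandwiched_upper_bound: "sandwiched upper_bound"
  unfolding sandwiched_def upper_bound_def
proof (intro ballI allI conjI impI order_refl)
  fix x s a and \<gamma> :: "real^'i"
  assume "x \<in> X" "\<gamma> \<in> nonneg_orthant" "feas x s a"
  then show "plan_payoff \<gamma> a x s \<le> (1 + (\<Sum>i\<in>UNIV. \<gamma> $ i)) * L"
    using plan_payoff_abs_le[OF feasible_adm_plans] abs_le_D1 by blast
qed

lemma bellman_obj_ge_plan_payoff:
  assumes F: "sandwiched F" and x: "x \<in> X" and \<gamma>: "\<gamma> \<in> nonneg_orthant"
    and lam: "lam \<in> nonneg_orthant" and a: "feas x s a"
  shows "plan_payoff \<gamma> a x s \<le> bellman_obj F \<gamma> x s (a [s]) lam"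
proof -
  define x' where "x' = \<zeta> x (a [s]) s"
  define a' where "a' = (\<lambda>k. a (k @ [s]))"
  have "x' \<in> X"
    unfolding x'_def using \<zeta>_in_X[OF x] feasible_first_action[OF a] A_tilde_subset by blast
  then have next_le: "plan_payoff (\<gamma> + lam) a' x' s' \<le> F (\<gamma> + lam) x' s'" for s'
    using F feasible_shift[OF a] nonneg_orthant_add[OF \<gamma> lam]
    unfolding sandwiched_def x'_def a'_def by blast
  have "plan_payoff \<gamma> a x s \<le> plan_payoff \<gamma> a x s + (\<Sum>i\<in>UNIV. lam $ i * (plan_value (g i) a x s - gbar i))"
    using lam gbar_le_plan_value[OF a] by (auto simp: mem_nonneg_orthant intro!: sum_nonneg)
  also have "\<dots> = r x (a [s]) s + (\<Sum>i\<in>UNIV. \<gamma> $ i * g i x (a [s]) s + lam $ i * (g i x (a [s]) s - gbar i))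
      + \<beta> * (\<Sum>s'\<in>UNIV. P s s' * plan_payoff (\<gamma> + lam) a' x' s')"
    unfolding x'_def a'_def by (rule plan_payoff_rec[OF a x])
  also have "\<dots> \<le> bellman_obj F \<gamma> x s (a [s]) lam"
    unfolding bellman_obj_def x'_def[symmetric] using next_le \<beta>_pos
    by (intro add_left_mono mult_left_mono sum_mono) (auto intro: mult_left_mono P_nonneg)
  finally show ?thesis .
qed

lemma rhs_ge_plan_payoff:
  assumes "sandwiched F" "x \<in> X" "\<gamma> \<in> nonneg_orthant" "feas x s a"
  shows "ereal (plan_payoff \<gamma> a x s) \<le> rhs F \<gamma> x s"
  unfolding rhs_eq
  by (rule SUP_upper2[OF feasible_first_action[OF assms(4)]], rule INF_greatest)
     (use bellman_obj_ge_plan_payoff[OF assms(1-3) _ assms(4)] in simp)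

lemma bellman_obj_le_upper_bound:
  assumes F: "\<And>s'. F \<gamma> (\<zeta> x a s) s' \<le> upper_bound \<gamma> (\<zeta> x a s) s'"
    and x: "x \<in> X" and \<gamma>: "\<gamma> \<in> nonneg_orthant" and a: "a \<in> A"
  shows "bellman_obj F \<gamma> x s a 0 \<le> upper_bound \<gamma> x s"
proof -
  have "(\<Sum>i\<in>UNIV. \<gamma> $ i * g i x a s) \<le> (\<Sum>i\<in>UNIV. \<gamma> $ i * ((1 - \<beta>) * L))"
    using \<gamma> g_abs_le[OF x a] by (intro sum_mono mult_left_mono) (auto simp: mem_nonneg_orthant abs_le_iff)
  moreover have "(\<Sum>s'\<in>UNIV. P s s' * F \<gamma> (\<zeta> x a s) s') \<le> upper_bound \<gamma> x s"
    by (rule next_exp_le) (use F in \<open>simp add: upper_bound_def\<close>)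
  ultimately have "bellman_obj F \<gamma> x s a 0
      \<le> (1 - \<beta>) * L + (\<Sum>i\<in>UNIV. \<gamma> $ i * ((1 - \<beta>) * L)) + \<beta> * upper_bound \<gamma> x s"
    unfolding bellman_obj_def using r_abs_le[OF x a, of s] \<beta>_pos
    by (intro add_mono mult_left_mono) auto
  also have "\<dots> = upper_bound \<gamma> x s"
  proof -
    have "(\<Sum>i\<in>UNIV. \<gamma> $ i * ((1 - \<beta>) * L)) = (1 - \<beta>) * ((\<Sum>i\<in>UNIV. \<gamma> $ i) * L)"
      by (simp add: sum_distrib_right sum_distrib_left mult_ac)
    then show ?thesis by (simp add: upper_bound_def algebra_simps)
  qed
  finally show ?thesis .
qed

lemma rhs_le_upper_bound:
  assumes "\<And>x s. x \<in> X \<Longrightarrow> F \<gamma> x s \<le> upper_bound \<gamma> x s" and x: "x \<in> X" and \<gamma>: "\<gamma> \<in> nonneg_orthant"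
  shows "rhs F \<gamma> x s \<le> ereal (upper_bound \<gamma> x s)"
  unfolding rhs_eq
proof (rule SUP_least)
  fix a assume "a \<in> A_tilde A p x s"
  then have a: "a \<in> A" using A_tilde_subset by blast
  have "(INF lam\<in>nonneg_orthant. ereal (bellman_obj F \<gamma> x s a lam)) \<le> ereal (bellman_obj F \<gamma> x s a 0)"
    by (rule INF_lower[OF zero_in_nonneg_orthant])
  also have "\<dots> \<le> ereal (upper_bound \<gamma> x s)"
    using bellman_obj_le_upper_bound[OF _ x \<gamma> a] assms(1) \<zeta>_in_X[OF x a] by simp
  finally show "(INF lam\<in>nonneg_orthant. ereal (bellman_obj F \<gamma> x s a lam)) \<le> ereal (upper_bound \<gamma> x s)" .
qed

lemma bellman_obj_mono:
  assumes "\<And>x s \<gamma>. x \<in> X \<Longrightarrow> \<gamma> \<in> nonneg_orthant \<Longrightarrow> F \<gamma> x s \<le> G \<gamma> x s"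
    and "x \<in> X" "\<gamma> \<in> nonneg_orthant" "lam \<in> nonneg_orthant" "a \<in> A"
  shows "bellman_obj F \<gamma> x s a lam \<le> bellman_obj G \<gamma> x s a lam"
proof -
  have "F (\<gamma> + lam) (\<zeta> x a s) s' \<le> G (\<gamma> + lam) (\<zeta> x a s) s'" for s'
    using assms(1)[OF \<zeta>_in_X[OF assms(2,5)] nonneg_orthant_add[OF assms(3,4)]] .
  then show ?thesis
    unfolding bellman_obj_def using \<beta>_pos
    by (intro add_left_mono mult_left_mono sum_mono) (auto intro: mult_left_mono P_nonneg)
qed

lemma rhs_mono:
  assumes "\<And>x s \<gamma>. x \<in> X \<Longrightarrow> \<gamma> \<in> nonneg_orthant \<Longrightarrow> F \<gamma> x s \<le> G \<gamma> x s"
    and "x \<in> X" "\<gamma> \<in> nonneg_orthant"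
  shows "rhs F \<gamma> x s \<le> rhs G \<gamma> x s"
  unfolding rhs_eq using assms A_tilde_subset
  by (intro SUP_subset_mono[OF order_refl] INF_superset_mono[OF order_refl]
        ereal_less_eq(3)[THEN iffD2] bellman_obj_mono) blast+

lemma rhs_attained:
  assumes "x \<in> X"
  obtains a where "a \<in> A_tilde A p x s"
    and "rhs F \<gamma> x s = (INF lam\<in>nonneg_orthant. ereal (bellman_obj F \<gamma> x s a lam))"
proof -
  let ?f = "\<lambda>a. INF lam\<in>nonneg_orthant. ereal (bellman_obj F \<gamma> x s a lam)"
  have fin: "finite (?f ` A_tilde A p x s)" and ne: "?f ` A_tilde A p x s \<noteq> {}"
    using finite_A_tilde A_tilde_nonempty[OF assms] by auto
  have "rhs F \<gamma> x s = Max (?f ` A_tilde A p x s)"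
    unfolding rhs_eq using cSup_eq_Max[OF fin ne] by simp
  with Max_in[OF fin ne] that show ?thesis by auto
qed

text \<open>On sandwiched functions the right-hand side is finite, so it defines a real-valued operator.\<close>

definition bellman_op :: "(real^'i \<Rightarrow> 'x \<Rightarrow> 's \<Rightarrow> real) \<Rightarrow> real^'i \<Rightarrow> 'x \<Rightarrow> 's \<Rightarrow> real" where
  "bellman_op F \<gamma> x s = real_of_ereal (rhs F \<gamma> x s)"

lemma rhs_eq_bellman_op:
  assumes F: "sandwiched F" and x: "x \<in> X" and \<gamma>: "\<gamma> \<in> nonneg_orthant"
  shows "rhs F \<gamma> x s = ereal (bellman_op F \<gamma> x s)"
proof -
  obtain a where "feas x s a" using standing[OF x] by blast
  then have "ereal (plan_payoff \<gamma> a x s) \<le> rhs F \<gamma> x s"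
    by (rule rhs_ge_plan_payoff[OF F x \<gamma>])
  moreover have "rhs F \<gamma> x s \<le> ereal (upper_bound \<gamma> x s)"
    by (rule rhs_le_upper_bound) (use F \<gamma> x in \<open>auto simp: sandwiched_def\<close>)
  ultimately have "\<bar>rhs F \<gamma> x s\<bar> \<noteq> \<infinity>" by auto
  then show ?thesis unfolding bellman_op_def by (simp add: ereal_real')
qed

lemma sandwiched_bellman_op:
  assumes F: "sandwiched F"
  shows "sandwiched (bellman_op F)"
  unfolding sandwiched_def
proof (intro ballI allI conjI impI)
  fix x s and \<gamma> :: "real^'i" assume x: "x \<in> X" and \<gamma>: "\<gamma> \<in> nonneg_orthant"
  have "rhs F \<gamma> x s \<le> ereal (upper_bound \<gamma> x s)"
    by (rule rhs_le_upper_bound) (use F \<gamma> x in \<open>auto simp: sandwiched_def\<close>)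
  then show "bellman_op F \<gamma> x s \<le> upper_bound \<gamma> x s"
    using rhs_eq_bellman_op[OF F x \<gamma>] by simp
  fix a assume "feas x s a"
  then show "plan_payoff \<gamma> a x s \<le> bellman_op F \<gamma> x s"
    using rhs_ge_plan_payoff[OF F x \<gamma>] rhs_eq_bellman_op[OF F x \<gamma>] by simp
qed

lemma bellman_op_maximizer:
  assumes F: "sandwiched F" and x: "x \<in> X" and \<gamma>: "\<gamma> \<in> nonneg_orthant"
  obtains a where "a \<in> A_tilde A p x s"
    and "\<And>lam. lam \<in> nonneg_orthant \<Longrightarrow> bellman_op F \<gamma> x s \<le> bellman_obj F \<gamma> x s a lam"
proof -
  obtain a where a: "a \<in> A_tilde A p x s"
    and eq: "rhs F \<gamma> x s = (INF lam\<in>nonneg_orthant. ereal (bellman_obj F \<gamma> x s a lam))"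
    using rhs_attained[OF x] .
  have "bellman_op F \<gamma> x s \<le> bellman_obj F \<gamma> x s a lam" if "lam \<in> nonneg_orthant" for lam
  proof -
    have "ereal (bellman_op F \<gamma> x s) = (INF lam\<in>nonneg_orthant. ereal (bellman_obj F \<gamma> x s a lam))"
      using eq rhs_eq_bellman_op[OF F x \<gamma>, of s] by simp
    also have "\<dots> \<le> ereal (bellman_obj F \<gamma> x s a lam)"
      by (rule INF_lower[OF that])
    finally show ?thesis by simp
  qed
  with a that show ?thesis by blast
qed

lemma bellman_op_approx:
  assumes F: "sandwiched F" and x: "x \<in> X" and \<gamma>: "\<gamma> \<in> nonneg_orthant"
    and a: "a \<in> A_tilde A p x s" and e: "0 < e"
  obtains lam where "lam \<in> nonneg_orthant" "bellman_obj F \<gamma> x s a lam < bellman_op F \<gamma> x s + e"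
proof -
  have "(INF lam\<in>nonneg_orthant. ereal (bellman_obj F \<gamma> x s a lam)) \<le> rhs F \<gamma> x s"
    unfolding rhs_eq by (rule SUP_upper[OF a])
  also have "\<dots> < ereal (bellman_op F \<gamma> x s + e)"
    using rhs_eq_bellman_op[OF F x \<gamma>] e by simp
  finally show ?thesis using that unfolding INF_less_iff by auto
qed

end

context decision_model
begin

definition convex_in_mult :: "(real^'i \<Rightarrow> 'x \<Rightarrow> 's \<Rightarrow> real) \<Rightarrow> bool" where
  "convex_in_mult F \<longleftrightarrow> (\<forall>x\<in>X. \<forall>s. convex_on nonneg_orthant (\<lambda>\<gamma>. F \<gamma> x s))"

definition lipschitz_in_mult :: "(real^'i \<Rightarrow> 'x \<Rightarrow> 's \<Rightarrow> real) \<Rightarrow> bool" where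
  "lipschitz_in_mult F \<longleftrightarrow> (\<forall>x\<in>X. \<forall>s. \<forall>\<gamma>1\<in>nonneg_orthant. \<forall>\<gamma>2\<in>nonneg_orthant.
      \<bar>F \<gamma>1 x s - F \<gamma>2 x s\<bar> \<le> L * (\<Sum>i\<in>UNIV. \<bar>\<gamma>1 $ i - \<gamma>2 $ i\<bar>))"

lemma convex_in_mult_upper_bound: "convex_in_mult upper_bound"
  unfolding convex_in_mult_def convex_on_def
proof (intro ballI allI conjI impI convex_nonneg_orthant)
  fix x s \<gamma>1 \<gamma>2 and u v :: real
  assume "u + v = 1"
  then have "L = u * L + v * L"
    by (metis distrib_right mult_1)
  then show "upper_bound (u *\<^sub>R \<gamma>1 + v *\<^sub>R \<gamma>2) x s \<le> u * upper_bound \<gamma>1 x s + v * upper_bound \<gamma>2 x s"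
    unfolding upper_bound_def by (simp add: sum.distrib sum_distrib_left sum_distrib_right algebra_simps)
qed

lemma lipschitz_in_mult_upper_bound: "lipschitz_in_mult upper_bound"
  unfolding lipschitz_in_mult_def
proof (intro ballI allI)
  fix x s \<gamma>1 \<gamma>2
  have "\<bar>upper_bound \<gamma>1 x s - upper_bound \<gamma>2 x s\<bar> = L * \<bar>\<Sum>i\<in>UNIV. \<gamma>1 $ i - \<gamma>2 $ i\<bar>"
    unfolding upper_bound_def using L_nonneg
    by (simp add: sum_subtractf left_diff_distrib[symmetric] abs_mult)
  also have "\<dots> \<le> L * (\<Sum>i\<in>UNIV. \<bar>\<gamma>1 $ i - \<gamma>2 $ i\<bar>)"
    using L_nonneg by (intro mult_left_mono sum_abs)
  finally show "\<bar>upper_bound \<gamma>1 x s - upper_bound \<gamma>2 x s\<bar> \<le> L * (\<Sum>i\<in>UNIV. \<bar>\<gamma>1 $ i - \<gamma>2 $ i\<bar>)" .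
qed

lemma next_exp_convex:
  assumes F: "convex_in_mult F" and x: "x \<in> X" and \<mu>: "\<mu>1 \<in> nonneg_orthant" "\<mu>2 \<in> nonneg_orthant"
    and u: "0 \<le> u" "0 \<le> v" "u + v = 1"
  shows "(\<Sum>s'\<in>UNIV. P s s' * F (u *\<^sub>R \<mu>1 + v *\<^sub>R \<mu>2) x s')
    \<le> u * (\<Sum>s'\<in>UNIV. P s s' * F \<mu>1 x s') + v * (\<Sum>s'\<in>UNIV. P s s' * F \<mu>2 x s')"
proof -
  have "F (u *\<^sub>R \<mu>1 + v *\<^sub>R \<mu>2) x s' \<le> u * F \<mu>1 x s' + v * F \<mu>2 x s'" for s'
    using F x \<mu> u unfolding convex_in_mult_def convex_on_def by blast
  then have "(\<Sum>s'\<in>UNIV. P s s' * F (u *\<^sub>R \<mu>1 + v *\<^sub>R \<mu>2) x s')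
      \<le> (\<Sum>s'\<in>UNIV. P s s' * (u * F \<mu>1 x s' + v * F \<mu>2 x s'))"
    by (intro sum_mono mult_left_mono P_nonneg)
  also have "\<dots> = u * (\<Sum>s'\<in>UNIV. P s s' * F \<mu>1 x s') + v * (\<Sum>s'\<in>UNIV. P s s' * F \<mu>2 x s')"
    by (simp add: sum_distrib_left sum.distrib algebra_simps)
  finally show ?thesis .
qed

lemma next_exp_lipschitz:
  assumes F: "lipschitz_in_mult F" and x: "x \<in> X" and \<mu>: "\<mu>1 \<in> nonneg_orthant" "\<mu>2 \<in> nonneg_orthant"
  shows "(\<Sum>s'\<in>UNIV. P s s' * F \<mu>1 x s')
    \<le> (\<Sum>s'\<in>UNIV. P s s' * F \<mu>2 x s') + L * (\<Sum>i\<in>UNIV. \<bar>\<mu>1 $ i - \<mu>2 $ i\<bar>)"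
proof -
  have "\<bar>F \<mu>1 x s' - F \<mu>2 x s'\<bar> \<le> L * (\<Sum>i\<in>UNIV. \<bar>\<mu>1 $ i - \<mu>2 $ i\<bar>)" for s'
    using F x \<mu> unfolding lipschitz_in_mult_def by blast
  then have "F \<mu>1 x s' \<le> F \<mu>2 x s' + L * (\<Sum>i\<in>UNIV. \<bar>\<mu>1 $ i - \<mu>2 $ i\<bar>)" for s'
    by (simp add: abs_diff_le_iff)
  then have "(\<Sum>s'\<in>UNIV. P s s' * F \<mu>1 x s')
      \<le> (\<Sum>s'\<in>UNIV. P s s' * (F \<mu>2 x s' + L * (\<Sum>i\<in>UNIV. \<bar>\<mu>1 $ i - \<mu>2 $ i\<bar>)))"
    by (intro sum_mono mult_left_mono P_nonneg)
  also have "\<dots> = (\<Sum>s'\<in>UNIV. P s s' * F \<mu>2 x s') + L * (\<Sum>i\<in>UNIV. \<bar>\<mu>1 $ i - \<mu>2 $ i\<bar>)"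
    by (simp add: distrib_left sum.distrib sum_distrib_right[symmetric] P_sum)
  finally show ?thesis .
qed

text \<open>The objective is jointly convex in (gamma, lambda): affine plus a convex function of gamma + lambda.\<close>

lemma bellman_obj_convex:
  assumes F: "convex_in_mult F" and x: "x \<in> X" and a: "a \<in> A"
    and \<gamma>: "\<gamma>1 \<in> nonneg_orthant" "\<gamma>2 \<in> nonneg_orthant" and l: "l1 \<in> nonneg_orthant" "l2 \<in> nonneg_orthant"
    and u: "0 \<le> u" "0 \<le> v" "u + v = 1"
  shows "bellman_obj F (u *\<^sub>R \<gamma>1 + v *\<^sub>R \<gamma>2) x s a (u *\<^sub>R l1 + v *\<^sub>R l2)
    \<le> u * bellman_obj F \<gamma>1 x s a l1 + v * bellman_obj F \<gamma>2 x s a l2"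
proof -
  define c where "c \<gamma> lam = r x a s + (\<Sum>i\<in>UNIV. \<gamma> $ i * g i x a s + lam $ i * (g i x a s - gbar i))"
    for \<gamma> lam :: "real^'i"
  define E where "E \<mu> = (\<Sum>s'\<in>UNIV. P s s' * F \<mu> (\<zeta> x a s) s')" for \<mu>
  have obj: "bellman_obj F \<gamma> x s a lam = c \<gamma> lam + \<beta> * E (\<gamma> + lam)" for \<gamma> lam
    unfolding bellman_obj_def c_def E_def ..
  have c_affine: "c (u *\<^sub>R \<gamma>1 + v *\<^sub>R \<gamma>2) (u *\<^sub>R l1 + v *\<^sub>R l2) = u * c \<gamma>1 l1 + v * c \<gamma>2 l2"
  proof -
    have "r x a s = u * r x a s + v * r x a s"
      using u(3) by (metis distrib_right mult_1)
    moreover have "(\<Sum>i\<in>UNIV. (u *\<^sub>R \<gamma>1 + v *\<^sub>R \<gamma>2) $ i * g i x a s + (u *\<^sub>R l1 + v *\<^sub>R l2) $ i * (g i x a s - gbar i))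
      = (\<Sum>i\<in>UNIV. u * (\<gamma>1 $ i * g i x a s + l1 $ i * (g i x a s - gbar i))
                  + v * (\<gamma>2 $ i * g i x a s + l2 $ i * (g i x a s - gbar i)))"
      by (rule sum.cong) (simp_all add: algebra_simps)
    ultimately show ?thesis
      unfolding c_def by (simp only: sum.distrib sum_distrib_left[symmetric]) (simp add: algebra_simps)
  qed
  have E_convex: "E (u *\<^sub>R (\<gamma>1 + l1) + v *\<^sub>R (\<gamma>2 + l2)) \<le> u * E (\<gamma>1 + l1) + v * E (\<gamma>2 + l2)"
    unfolding E_def using \<zeta>_in_X[OF x a] nonneg_orthant_add[OF \<gamma>(1) l(1)] nonneg_orthant_add[OF \<gamma>(2) l(2)]
    by (rule next_exp_convex[OF F _ _ _ u])
  have comb: "u *\<^sub>R \<gamma>1 + v *\<^sub>R \<gamma>2 + (u *\<^sub>R l1 + v *\<^sub>R l2) = u *\<^sub>R (\<gamma>1 + l1) + v *\<^sub>R (\<gamma>2 + l2)"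
    by (simp add: algebra_simps)
  have "\<beta> * E (u *\<^sub>R (\<gamma>1 + l1) + v *\<^sub>R (\<gamma>2 + l2)) \<le> \<beta> * (u * E (\<gamma>1 + l1) + v * E (\<gamma>2 + l2))"
    using E_convex \<beta>_pos by simp
  moreover have "u * (c \<gamma>1 l1 + \<beta> * E (\<gamma>1 + l1)) + v * (c \<gamma>2 l2 + \<beta> * E (\<gamma>2 + l2))
      = (u * c \<gamma>1 l1 + v * c \<gamma>2 l2) + \<beta> * (u * E (\<gamma>1 + l1) + v * E (\<gamma>2 + l2))"
    by (simp add: algebra_simps)
  ultimately show ?thesis
    unfolding obj c_affine comb by linarith
qed

lemma convex_in_mult_bellman_op:
  assumes F: "sandwiched F" and C: "convex_in_mult F"
  shows "convex_in_mult (bellman_op F)"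
  unfolding convex_in_mult_def convex_on_def
proof (intro ballI allI conjI impI convex_nonneg_orthant)
  fix x s and \<gamma>1 \<gamma>2 :: "real^'i" and u v :: real
  assume x: "x \<in> X" and \<gamma>: "\<gamma>1 \<in> nonneg_orthant" "\<gamma>2 \<in> nonneg_orthant" and u: "0 \<le> u" "0 \<le> v" "u + v = 1"
  have \<gamma>u: "u *\<^sub>R \<gamma>1 + v *\<^sub>R \<gamma>2 \<in> nonneg_orthant"
    using convex_nonneg_orthant \<gamma> u unfolding convex_def by blast
  obtain a where a: "a \<in> A_tilde A p x s" and opt: "\<And>lam. lam \<in> nonneg_orthant \<Longrightarrow>
      bellman_op F (u *\<^sub>R \<gamma>1 + v *\<^sub>R \<gamma>2) x s \<le> bellman_obj F (u *\<^sub>R \<gamma>1 + v *\<^sub>R \<gamma>2) x s a lam"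
    using bellman_op_maximizer[OF F x \<gamma>u] by blast
  show "bellman_op F (u *\<^sub>R \<gamma>1 + v *\<^sub>R \<gamma>2) x s \<le> u * bellman_op F \<gamma>1 x s + v * bellman_op F \<gamma>2 x s"
  proof (rule field_le_epsilon)
    fix e :: real assume e: "0 < e"
    obtain l1 where l1: "l1 \<in> nonneg_orthant" "bellman_obj F \<gamma>1 x s a l1 < bellman_op F \<gamma>1 x s + e"
      using bellman_op_approx[OF F x \<gamma>(1) a e] .
    obtain l2 where l2: "l2 \<in> nonneg_orthant" "bellman_obj F \<gamma>2 x s a l2 < bellman_op F \<gamma>2 x s + e"
      using bellman_op_approx[OF F x \<gamma>(2) a e] .
    have "u *\<^sub>R l1 + v *\<^sub>R l2 \<in> nonneg_orthant"
      using convex_nonneg_orthant l1 l2 u unfolding convex_def by blast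
    then have "bellman_op F (u *\<^sub>R \<gamma>1 + v *\<^sub>R \<gamma>2) x s
        \<le> bellman_obj F (u *\<^sub>R \<gamma>1 + v *\<^sub>R \<gamma>2) x s a (u *\<^sub>R l1 + v *\<^sub>R l2)"
      by (rule opt)
    also have "\<dots> \<le> u * bellman_obj F \<gamma>1 x s a l1 + v * bellman_obj F \<gamma>2 x s a l2"
      using a A_tilde_subset by (intro bellman_obj_convex[OF C x _ \<gamma> l1(1) l2(1) u]) blast
    also have "\<dots> \<le> u * (bellman_op F \<gamma>1 x s + e) + v * (bellman_op F \<gamma>2 x s + e)"
      using l1 l2 u by (intro add_mono mult_left_mono) auto
    also have "\<dots> = u * bellman_op F \<gamma>1 x s + v * bellman_op F \<gamma>2 x s + (u + v) * e"
      by (simp add: algebra_simps)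
    finally show "bellman_op F (u *\<^sub>R \<gamma>1 + v *\<^sub>R \<gamma>2) x s \<le> u * bellman_op F \<gamma>1 x s + v * bellman_op F \<gamma>2 x s + e"
      using u(3) by simp
  qed
qed

lemma bellman_obj_lipschitz:
  assumes F: "lipschitz_in_mult F" and x: "x \<in> X" and a: "a \<in> A"
    and \<gamma>: "\<gamma>1 \<in> nonneg_orthant" "\<gamma>2 \<in> nonneg_orthant" and lam: "lam \<in> nonneg_orthant"
  shows "bellman_obj F \<gamma>1 x s a lam \<le> bellman_obj F \<gamma>2 x s a lam + L * (\<Sum>i\<in>UNIV. \<bar>\<gamma>1 $ i - \<gamma>2 $ i\<bar>)"
proof -
  define d where "d = (\<Sum>i\<in>UNIV. \<bar>\<gamma>1 $ i - \<gamma>2 $ i\<bar>)"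
  have "(\<Sum>i\<in>UNIV. (\<gamma>1 $ i - \<gamma>2 $ i) * g i x a s) \<le> (\<Sum>i\<in>UNIV. \<bar>\<gamma>1 $ i - \<gamma>2 $ i\<bar> * ((1 - \<beta>) * L))"
  proof (rule sum_mono)
    fix i
    have "\<bar>(\<gamma>1 $ i - \<gamma>2 $ i) * g i x a s\<bar> \<le> \<bar>\<gamma>1 $ i - \<gamma>2 $ i\<bar> * ((1 - \<beta>) * L)"
      unfolding abs_mult by (rule mult_left_mono[OF g_abs_le[OF x a]]) simp
    then show "(\<gamma>1 $ i - \<gamma>2 $ i) * g i x a s \<le> \<bar>\<gamma>1 $ i - \<gamma>2 $ i\<bar> * ((1 - \<beta>) * L)"
      by simp
  qed
  also have "\<dots> = (1 - \<beta>) * L * d"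
    unfolding d_def by (simp add: sum_distrib_left mult_ac)
  finally have current: "(\<Sum>i\<in>UNIV. (\<gamma>1 $ i - \<gamma>2 $ i) * g i x a s) \<le> (1 - \<beta>) * L * d" .
  have "(\<Sum>s'\<in>UNIV. P s s' * F (\<gamma>1 + lam) (\<zeta> x a s) s')
      \<le> (\<Sum>s'\<in>UNIV. P s s' * F (\<gamma>2 + lam) (\<zeta> x a s) s') + L * d"
    using next_exp_lipschitz[OF F \<zeta>_in_X[OF x a] nonneg_orthant_add[OF \<gamma>(1) lam] nonneg_orthant_add[OF \<gamma>(2) lam]]
    by (simp add: d_def)
  then have next_le: "\<beta> * (\<Sum>s'\<in>UNIV. P s s' * F (\<gamma>1 + lam) (\<zeta> x a s) s')
      \<le> \<beta> * (\<Sum>s'\<in>UNIV. P s s' * F (\<gamma>2 + lam) (\<zeta> x a s) s') + \<beta> * (L * d)"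
    using \<beta>_pos by (simp add: distrib_left[symmetric])
  have "(\<Sum>i\<in>UNIV. \<gamma>1 $ i * g i x a s + lam $ i * (g i x a s - gbar i))
      = (\<Sum>i\<in>UNIV. \<gamma>2 $ i * g i x a s + lam $ i * (g i x a s - gbar i))
        + (\<Sum>i\<in>UNIV. (\<gamma>1 $ i - \<gamma>2 $ i) * g i x a s)"
    by (simp add: sum.distrib[symmetric] algebra_simps)
  with current next_le show ?thesis
    unfolding bellman_obj_def d_def[symmetric] by (simp add: algebra_simps)
qed

lemma lipschitz_in_mult_bellman_op:
  assumes F: "sandwiched F" and Lip: "lipschitz_in_mult F"
  shows "lipschitz_in_mult (bellman_op F)"
proof -
  have one_sided: "bellman_op F \<gamma>1 x s \<le> bellman_op F \<gamma>2 x s + L * (\<Sum>i\<in>UNIV. \<bar>\<gamma>1 $ i - \<gamma>2 $ i\<bar>)"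
    if x: "x \<in> X" and \<gamma>: "\<gamma>1 \<in> nonneg_orthant" "\<gamma>2 \<in> nonneg_orthant" for x s \<gamma>1 \<gamma>2
  proof -
    obtain a where a: "a \<in> A_tilde A p x s"
      and opt: "\<And>lam. lam \<in> nonneg_orthant \<Longrightarrow> bellman_op F \<gamma>1 x s \<le> bellman_obj F \<gamma>1 x s a lam"
      using bellman_op_maximizer[OF F x \<gamma>(1)] by blast
    show ?thesis
    proof (rule field_le_epsilon)
      fix e :: real assume "0 < e"
      then obtain lam where lam: "lam \<in> nonneg_orthant" "bellman_obj F \<gamma>2 x s a lam < bellman_op F \<gamma>2 x s + e"
        using bellman_op_approx[OF F x \<gamma>(2) a] by blast
      have "bellman_op F \<gamma>1 x s \<le> bellman_obj F \<gamma>1 x s a lam"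
        by (rule opt[OF lam(1)])
      also have "\<dots> \<le> bellman_obj F \<gamma>2 x s a lam + L * (\<Sum>i\<in>UNIV. \<bar>\<gamma>1 $ i - \<gamma>2 $ i\<bar>)"
        using a A_tilde_subset by (intro bellman_obj_lipschitz[OF Lip x _ \<gamma> lam(1)]) blast
      finally show "bellman_op F \<gamma>1 x s \<le> bellman_op F \<gamma>2 x s + L * (\<Sum>i\<in>UNIV. \<bar>\<gamma>1 $ i - \<gamma>2 $ i\<bar>) + e"
        using lam(2) by simp
    qed
  qed
  show ?thesis
    unfolding lipschitz_in_mult_def
  proof (intro ballI allI)
    fix x s and \<gamma>1 \<gamma>2 :: "real^'i" assume "x \<in> X" "\<gamma>1 \<in> nonneg_orthant" "\<gamma>2 \<in> nonneg_orthant"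
    moreover have "(\<Sum>i\<in>UNIV. \<bar>\<gamma>2 $ i - \<gamma>1 $ i\<bar>) = (\<Sum>i\<in>UNIV. \<bar>\<gamma>1 $ i - \<gamma>2 $ i\<bar>)"
      by (simp add: abs_minus_commute)
    ultimately show "\<bar>bellman_op F \<gamma>1 x s - bellman_op F \<gamma>2 x s\<bar> \<le> L * (\<Sum>i\<in>UNIV. \<bar>\<gamma>1 $ i - \<gamma>2 $ i\<bar>)"
      using one_sided[of x \<gamma>1 \<gamma>2 s] one_sided[of x \<gamma>2 \<gamma>1 s] by (simp add: abs_le_iff)
  qed
qed

end

section \<open>Existence of a solution by value iteration\<close>

context decision_model
begin

definition value_iter :: "nat \<Rightarrow> real^'i \<Rightarrow> 'x \<Rightarrow> 's \<Rightarrow> real" where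
  "value_iter n = (bellman_op ^^ n) upper_bound"

lemma value_iter_0: "value_iter 0 = upper_bound"
  by (simp add: value_iter_def)

lemma value_iter_Suc: "value_iter (Suc n) = bellman_op (value_iter n)"
  by (simp add: value_iter_def)

lemma value_iter_invariants:
  "sandwiched (value_iter n) \<and> convex_in_mult (value_iter n) \<and> lipschitz_in_mult (value_iter n)"
proof (induction n)
  case 0
  show ?case
    unfolding value_iter_0
    using sandwiched_upper_bound convex_in_mult_upper_bound lipschitz_in_mult_upper_bound by blast
next
  case (Suc n)
  then show ?case
    unfolding value_iter_Suc
    using sandwiched_bellman_op convex_in_mult_bellman_op lipschitz_in_mult_bellman_op by blast
qed

lemma sandwiched_value_iter: "sandwiched (value_iter n)"
  using value_iter_invariants by blast

lemma rhs_value_iter: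
  "x \<in> X \<Longrightarrow> \<gamma> \<in> nonneg_orthant \<Longrightarrow> rhs (value_iter n) \<gamma> x s = ereal (value_iter (Suc n) \<gamma> x s)"
  using rhs_eq_bellman_op[OF sandwiched_value_iter] by (simp add: value_iter_Suc)

lemma value_iter_Suc_le: "x \<in> X \<Longrightarrow> \<gamma> \<in> nonneg_orthant \<Longrightarrow> value_iter (Suc n) \<gamma> x s \<le> value_iter n \<gamma> x s"
proof (induction n arbitrary: x \<gamma> s)
  case 0
  then show ?case
    using sandwiched_value_iter[of "Suc 0"] unfolding sandwiched_def value_iter_0 by blast
next
  case (Suc n)
  have "rhs (value_iter (Suc n)) \<gamma> x s \<le> rhs (value_iter n) \<gamma> x s"
    by (rule rhs_mono[OF Suc.IH Suc.prems])
  then show ?case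
    using Suc.prems by (simp add: rhs_value_iter)
qed

definition value_lim :: "real^'i \<Rightarrow> 'x \<Rightarrow> 's \<Rightarrow> real" where
  "value_lim \<gamma> x s = lim (\<lambda>n. value_iter n \<gamma> x s)"

text \<open>The iterates decrease and stay above the payoff of a feasible plan, which exists by the
  standing assumption.\<close>

lemma value_iter_tendsto:
  assumes x: "x \<in> X" and \<gamma>: "\<gamma> \<in> nonneg_orthant"
  shows "(\<lambda>n. value_iter n \<gamma> x s) \<longlonglongrightarrow> value_lim \<gamma> x s"
proof -
  obtain a where "feas x s a"
    using standing[OF x] by blast
  then have "\<forall>n. plan_payoff \<gamma> a x s \<le> value_iter n \<gamma> x s"
    using sandwiched_value_iter x \<gamma> unfolding sandwiched_def by blast
  moreover have "decseq (\<lambda>n. value_iter n \<gamma> x s)"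
    using value_iter_Suc_le[OF x \<gamma>] by (rule decseq_SucI)
  ultimately obtain l where "(\<lambda>n. value_iter n \<gamma> x s) \<longlonglongrightarrow> l"
    using decseq_convergent by blast
  then show ?thesis
    unfolding value_lim_def by (simp add: limI)
qed

lemma value_lim_le:
  assumes "x \<in> X" "\<gamma> \<in> nonneg_orthant"
  shows "value_lim \<gamma> x s \<le> value_iter n \<gamma> x s"
  by (rule decseq_ge[OF decseq_SucI value_iter_tendsto[OF assms]]) (rule value_iter_Suc_le[OF assms])

lemma sandwiched_value_lim: "sandwiched value_lim"
  unfolding sandwiched_def
proof (intro ballI allI conjI impI)
  fix x s and \<gamma> :: "real^'i" assume x: "x \<in> X" and \<gamma>: "\<gamma> \<in> nonneg_orthant"
  show "value_lim \<gamma> x s \<le> upper_bound \<gamma> x s"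
    using value_lim_le[OF x \<gamma>, of s 0] by (simp add: value_iter_0)
  fix a assume "feas x s a"
  then show "plan_payoff \<gamma> a x s \<le> value_lim \<gamma> x s"
    using sandwiched_value_iter x \<gamma> unfolding sandwiched_def
    by (intro LIMSEQ_le_const[OF value_iter_tendsto[OF x \<gamma>]]) blast
qed

lemma convex_in_mult_value_lim: "convex_in_mult value_lim"
  unfolding convex_in_mult_def convex_on_def
proof (intro ballI allI conjI impI convex_nonneg_orthant)
  fix x s and \<gamma>1 \<gamma>2 :: "real^'i" and u v :: real
  assume x: "x \<in> X" and \<gamma>: "\<gamma>1 \<in> nonneg_orthant" "\<gamma>2 \<in> nonneg_orthant" and u: "0 \<le> u" "0 \<le> v" "u + v = 1"
  have "u *\<^sub>R \<gamma>1 + v *\<^sub>R \<gamma>2 \<in> nonneg_orthant"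
    using convex_nonneg_orthant \<gamma> u unfolding convex_def by blast
  then show "value_lim (u *\<^sub>R \<gamma>1 + v *\<^sub>R \<gamma>2) x s \<le> u * value_lim \<gamma>1 x s + v * value_lim \<gamma>2 x s"
  proof (rule LIMSEQ_le[OF value_iter_tendsto[OF x]])
    show "(\<lambda>n. u * value_iter n \<gamma>1 x s + v * value_iter n \<gamma>2 x s) \<longlonglongrightarrow> u * value_lim \<gamma>1 x s + v * value_lim \<gamma>2 x s"
      by (intro tendsto_intros value_iter_tendsto x \<gamma>)
    show "\<exists>N. \<forall>n\<ge>N. value_iter n (u *\<^sub>R \<gamma>1 + v *\<^sub>R \<gamma>2) x s \<le> u * value_iter n \<gamma>1 x s + v * value_iter n \<gamma>2 x s"
      using value_iter_invariants x \<gamma> u unfolding convex_in_mult_def convex_on_def by blast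
  qed
qed

lemma lipschitz_in_mult_value_lim: "lipschitz_in_mult value_lim"
  unfolding lipschitz_in_mult_def
proof (intro ballI allI)
  fix x s and \<gamma>1 \<gamma>2 :: "real^'i"
  assume x: "x \<in> X" and \<gamma>: "\<gamma>1 \<in> nonneg_orthant" "\<gamma>2 \<in> nonneg_orthant"
  show "\<bar>value_lim \<gamma>1 x s - value_lim \<gamma>2 x s\<bar> \<le> L * (\<Sum>i\<in>UNIV. \<bar>\<gamma>1 $ i - \<gamma>2 $ i\<bar>)"
  proof (rule LIMSEQ_le_const2)
    show "(\<lambda>n. \<bar>value_iter n \<gamma>1 x s - value_iter n \<gamma>2 x s\<bar>) \<longlonglongrightarrow> \<bar>value_lim \<gamma>1 x s - value_lim \<gamma>2 x s\<bar>"
      by (intro tendsto_intros value_iter_tendsto x \<gamma>)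
    show "\<exists>N. \<forall>n\<ge>N. \<bar>value_iter n \<gamma>1 x s - value_iter n \<gamma>2 x s\<bar> \<le> L * (\<Sum>i\<in>UNIV. \<bar>\<gamma>1 $ i - \<gamma>2 $ i\<bar>)"
      using value_iter_invariants x \<gamma> unfolding lipschitz_in_mult_def by blast
  qed
qed

lemma bellman_obj_value_iter_tendsto:
  assumes "x \<in> X" "\<gamma> \<in> nonneg_orthant" "lam \<in> nonneg_orthant" "a \<in> A"
  shows "(\<lambda>n. bellman_obj (value_iter n) \<gamma> x s a lam) \<longlonglongrightarrow> bellman_obj value_lim \<gamma> x s a lam"
  unfolding bellman_obj_def
  by (intro tendsto_intros value_iter_tendsto \<zeta>_in_X[OF assms(1,4)] nonneg_orthant_add[OF assms(2,3)])

lemma rhs_value_lim_le: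
  assumes x: "x \<in> X" and \<gamma>: "\<gamma> \<in> nonneg_orthant"
  shows "rhs value_lim \<gamma> x s \<le> ereal (value_lim \<gamma> x s)"
proof -
  have "bellman_op value_lim \<gamma> x s \<le> value_iter (Suc n) \<gamma> x s" for n
  proof -
    have "ereal (bellman_op value_lim \<gamma> x s) \<le> rhs (value_iter n) \<gamma> x s"
      unfolding rhs_eq_bellman_op[OF sandwiched_value_lim x \<gamma>, symmetric]
      by (rule rhs_mono[OF value_lim_le x \<gamma>])
    then show ?thesis
      using x \<gamma> by (simp add: rhs_value_iter)
  qed
  then have "bellman_op value_lim \<gamma> x s \<le> value_lim \<gamma> x s"
    by (intro LIMSEQ_le_const[OF LIMSEQ_Suc[OF value_iter_tendsto[OF x \<gamma>]]]) auto
  then show ?thesis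
    using rhs_eq_bellman_op[OF sandwiched_value_lim x \<gamma>] by simp
qed

text \<open>If the right-hand side were smaller, then for each of the finitely many actions some
  multiplier would push the objective below the limit, and, by convergence, already for a
  single iterate; this contradicts \<open>value_lim \<le> value_iter (Suc n)\<close>.\<close>

lemma value_lim_le_rhs:
  assumes x: "x \<in> X" and \<gamma>: "\<gamma> \<in> nonneg_orthant"
  shows "ereal (value_lim \<gamma> x s) \<le> rhs value_lim \<gamma> x s"
proof (rule ccontr)
  assume "\<not> ereal (value_lim \<gamma> x s) \<le> rhs value_lim \<gamma> x s"
  then have less: "rhs value_lim \<gamma> x s < ereal (value_lim \<gamma> x s)"
    by simp
  have "\<forall>a\<in>A_tilde A p x s. \<exists>lam. lam \<in> nonneg_orthant \<and> bellman_obj value_lim \<gamma> x s a lam < value_lim \<gamma> x s"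
  proof
    fix a assume a: "a \<in> A_tilde A p x s"
    have "(INF lam\<in>nonneg_orthant. ereal (bellman_obj value_lim \<gamma> x s a lam)) \<le> rhs value_lim \<gamma> x s"
      unfolding rhs_eq by (rule SUP_upper[OF a])
    also note less
    finally show "\<exists>lam. lam \<in> nonneg_orthant \<and> bellman_obj value_lim \<gamma> x s a lam < value_lim \<gamma> x s"
      unfolding INF_less_iff by auto
  qed
  from bchoice[OF this] obtain lam where lam: "\<And>a. a \<in> A_tilde A p x s \<Longrightarrow>
      lam a \<in> nonneg_orthant \<and> bellman_obj value_lim \<gamma> x s a (lam a) < value_lim \<gamma> x s"
    by blast
  have "\<forall>a\<in>A_tilde A p x s. eventually (\<lambda>n. bellman_obj (value_iter n) \<gamma> x s a (lam a) < value_lim \<gamma> x s) sequentially"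
  proof
    fix a assume a: "a \<in> A_tilde A p x s"
    then have "a \<in> A" using A_tilde_subset by blast
    show "eventually (\<lambda>n. bellman_obj (value_iter n) \<gamma> x s a (lam a) < value_lim \<gamma> x s) sequentially"
      by (rule order_tendstoD(2)[OF bellman_obj_value_iter_tendsto[OF x \<gamma> _ \<open>a \<in> A\<close>]])
         (use lam[OF a] in auto)
  qed
  from eventually_ball_finite[OF finite_A_tilde this]
  obtain n where n: "\<And>a. a \<in> A_tilde A p x s \<Longrightarrow> bellman_obj (value_iter n) \<gamma> x s a (lam a) < value_lim \<gamma> x s"
    unfolding eventually_sequentially by blast
  obtain a where a: "a \<in> A_tilde A p x s"
    and opt: "\<And>\<mu>. \<mu> \<in> nonneg_orthant \<Longrightarrow> bellman_op (value_iter n) \<gamma> x s \<le> bellman_obj (value_iter n) \<gamma> x s a \<mu>"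
    using bellman_op_maximizer[OF sandwiched_value_iter x \<gamma>] by blast
  have "value_iter (Suc n) \<gamma> x s \<le> bellman_obj (value_iter n) \<gamma> x s a (lam a)"
    unfolding value_iter_Suc using opt lam[OF a] by blast
  also have "\<dots> < value_lim \<gamma> x s"
    by (rule n[OF a])
  finally show False
    using value_lim_le[OF x \<gamma>, of s "Suc n"] by simp
qed

lemma value_lim_solves_bellman:
  "x \<in> X \<Longrightarrow> \<gamma> \<in> nonneg_orthant \<Longrightarrow> ereal (value_lim \<gamma> x s) = rhs value_lim \<gamma> x s"
  by (rule antisym[OF value_lim_le_rhs rhs_value_lim_le])

end

section \<open>Membership in the space M\<close>

lemma closed_Bk: "closed (Bk k :: (real^'i::finite) set)"
proof -
  have "Bk k = {\<gamma>::real^'i. \<forall>i. 0 \<le> \<gamma> $ i} \<inter> {\<gamma>. \<forall>i. \<gamma> $ i \<le> k}"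
    by (auto simp: Bk_def)
  also have "closed \<dots>"
    using closed_interval_left_cart[of "\<chi> i. k"] closed_positive_orthant by (intro closed_Int) auto
  finally show ?thesis .
qed

lemma Bk_subset_nonneg_orthant: "Bk k \<subseteq> nonneg_orthant"
  by (auto simp: Bk_def nonneg_orthant_def)

lemma sum_le_of_mem_Bk: "(\<gamma>::real^'i::finite) \<in> Bk k \<Longrightarrow> (\<Sum>i\<in>UNIV. \<gamma> $ i) \<le> real CARD('i) * k"
  using sum_bounded_above[of UNIV "\<lambda>i. \<gamma> $ i" k] by (simp add: Bk_def)

lemma continuous_on_if_l1_lipschitz:
  fixes f :: "real^'i::finite \<Rightarrow> real"
  assumes "\<And>\<gamma>1 \<gamma>2. \<gamma>1 \<in> S \<Longrightarrow> \<gamma>2 \<in> S \<Longrightarrow> \<bar>f \<gamma>1 - f \<gamma>2\<bar> \<le> C * (\<Sum>i\<in>UNIV. \<bar>\<gamma>1 $ i - \<gamma>2 $ i\<bar>)"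
    and "0 \<le> C"
  shows "continuous_on S f"
proof (rule lipschitz_on_continuous_on)
  have "dist (f x) (f y) \<le> (C * real CARD('i)) * dist x y" if "x \<in> S" "y \<in> S" for x y
  proof -
    have "(\<Sum>i\<in>UNIV. \<bar>(x - y) $ i\<bar>) \<le> (\<Sum>i\<in>(UNIV::'i set). norm (x - y))"
      by (rule sum_mono) (rule component_le_norm_cart)
    then have "\<bar>f x - f y\<bar> \<le> C * (real CARD('i) * norm (x - y))"
      using assms(1)[OF that] mult_left_mono[OF _ assms(2)] by fastforce
    then show ?thesis
      by (simp add: dist_norm dist_real_def mult_ac)
  qed
  then show "(C * real CARD('i))-lipschitz_on S f"
    unfolding lipschitz_on_def using assms(2) by auto
qed

lemma Linf_norm_le:
  fixes f :: "real^'i::finite \<Rightarrow> real"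
  assumes "continuous_on (Bk k) f" and "\<And>\<gamma>. \<gamma> \<in> Bk k \<Longrightarrow> \<bar>f \<gamma>\<bar> \<le> M"
  shows "Linf_norm k f \<le> ereal M"
proof -
  have "Bk k \<in> sets (lborel :: (real^'i) measure)"
    using borel_closed[OF closed_Bk[of k]] by simp
  then have "Bk k \<in> sets (lebesgue :: (real^'i) measure)"
    by simp
  with assms(1) have "f \<in> borel_measurable (lebesgue_on (Bk k))"
    by (rule continuous_imp_measurable_on_sets_lebesgue)
  then have "(\<lambda>\<gamma>. ereal \<bar>f \<gamma>\<bar>) \<in> borel_measurable (lebesgue_on (Bk k))"
    by measurable
  then show ?thesis
    unfolding Linf_norm_def
    by (rule esssup_I) (rule AE_I2, use assms(2) in \<open>auto simp: space_restrict_space\<close>)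
qed

lemma summable_Suc_mult_half_power: "summable (\<lambda>k. (1/2::real) ^ Suc k * real (Suc k))"
proof -
  have "summable (\<lambda>k. diffs (\<lambda>_. 1::real) k * (1/2) ^ k)"
    by (rule termdiff_converges[where K = 1]) (auto intro: summable_geometric)
  then have "summable (\<lambda>k. (1/2) * (diffs (\<lambda>_. 1::real) k * (1/2) ^ k))"
    by (rule summable_mult)
  then show ?thesis
    by (simp add: diffs_def mult_ac)
qed

lemma weighted_Linf_norm_sum_le:
  assumes "0 \<le> C" and "\<And>k. 1 \<le> k \<Longrightarrow> Linf_norm (real k) f \<le> ereal (C * real k)"
  shows "(\<Sum>k. ennreal ((1/2) ^ Suc k) * e2ennreal (Linf_norm (real (Suc k)) f))
    \<le> ennreal (C * (\<Sum>k. (1/2) ^ Suc k * real (Suc k)))"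
proof -
  have "(\<Sum>k. ennreal ((1/2) ^ Suc k) * e2ennreal (Linf_norm (real (Suc k)) f))
      \<le> (\<Sum>k. ennreal (C * ((1/2) ^ Suc k * real (Suc k))))"
  proof (rule suminf_le[OF _ summableI summableI])
    fix k
    have "e2ennreal (Linf_norm (real (Suc k)) f) \<le> e2ennreal (ereal (C * real (Suc k)))"
      by (rule e2ennreal_mono) (rule assms(2), simp)
    then have "ennreal ((1/2) ^ Suc k) * e2ennreal (Linf_norm (real (Suc k)) f)
        \<le> ennreal ((1/2) ^ Suc k) * ennreal (C * real (Suc k))"
      by (intro mult_left_mono) auto
    also have "\<dots> = ennreal (C * ((1/2) ^ Suc k * real (Suc k)))"
      using assms(1) by (subst ennreal_mult[symmetric]) (auto simp: mult_ac)
    finally show "ennreal ((1/2) ^ Suc k) * e2ennreal (Linf_norm (real (Suc k)) f)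
        \<le> ennreal (C * ((1/2) ^ Suc k * real (Suc k)))" .
  qed
  also have "\<dots> = ennreal (\<Sum>k. C * ((1/2) ^ Suc k * real (Suc k)))"
    using assms(1) summable_Suc_mult_half_power
    by (intro suminf_ennreal2) (auto intro: summable_mult)
  also have "\<dots> = ennreal (C * (\<Sum>k. (1/2) ^ Suc k * real (Suc k)))"
    by (simp only: suminf_mult[OF summable_Suc_mult_half_power])
  finally show ?thesis .
qed

lemma enum_weighted_suminf_le:
  assumes xenum: "bij_betw xenum (enum_index X) X" and M: "0 \<le> M"
    and bound: "\<And>x. x \<in> X \<Longrightarrow> f x \<le> ennreal M"
  shows "(\<Sum>j. (if j \<in> enum_index X then ennreal ((1/2) ^ j) else 0) * f (xenum j)) \<le> ennreal (2 * M)"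
proof -
  have "(\<Sum>j. (if j \<in> enum_index X then ennreal ((1/2) ^ j) else 0) * f (xenum j))
      \<le> (\<Sum>j. ennreal ((1/2) ^ j * M))"
  proof (rule suminf_le[OF _ summableI summableI])
    fix j
    show "(if j \<in> enum_index X then ennreal ((1/2) ^ j) else 0) * f (xenum j) \<le> ennreal ((1/2) ^ j * M)"
    proof (cases "j \<in> enum_index X")
      case True
      then have "ennreal ((1/2) ^ j) * f (xenum j) \<le> ennreal ((1/2) ^ j) * ennreal M"
        using bound bij_betw_apply[OF xenum] by (intro mult_left_mono) auto
      with True M show ?thesis
        by (simp add: ennreal_mult)
    qed simp
  qed
  also have "\<dots> = ennreal (\<Sum>j. (1/2) ^ j * M)"
    using M by (intro suminf_ennreal2) (auto intro: summable_mult2 summable_geometric)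
  also have "(\<Sum>j. (1/2::real) ^ j * M) = 2 * M"
    using suminf_mult2[OF summable_geometric[of "1/2::real"], of M] suminf_geometric[of "1/2::real"] by simp
  finally show ?thesis .
qed

lemma in_Mspace_if_Linf_norm_linear:
  fixes F :: "real^'i::finite \<Rightarrow> 'x \<Rightarrow> 's::finite \<Rightarrow> real"
  assumes xenum: "bij_betw xenum (enum_index X) X" and C: "0 \<le> C"
    and bound: "\<And>x s k. x \<in> X \<Longrightarrow> 1 \<le> k \<Longrightarrow> Linf_norm (real k) (\<lambda>\<gamma>. F \<gamma> x s) \<le> ereal (C * real k)"
  shows "F \<in> Mspace X senum xenum"
  unfolding Mspace_def
proof (intro CollectI conjI ballI allI impI)
  fix x s and k :: nat assume "x \<in> X" "1 \<le> k"
  then show "Linf_norm (real k) (\<lambda>\<gamma>. F \<gamma> x s) < \<infinity>"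
    by (intro le_less_trans[OF bound]) simp_all
next
  define M where "M = C * (\<Sum>k. (1/2) ^ Suc k * real (Suc k))"
  have M: "0 \<le> M"
    unfolding M_def using C summable_Suc_mult_half_power by (simp add: suminf_nonneg)
  have "(\<Sum>j. (if j \<in> enum_index X then ennreal ((1/2) ^ j) else 0) *
          (\<Sum>k. ennreal ((1/2) ^ Suc k) * e2ennreal (Linf_norm (real (Suc k)) (\<lambda>\<gamma>. F \<gamma> (xenum j) s))))
      \<le> ennreal (2 * M)" for s
    unfolding M_def using bound C
    by (intro enum_weighted_suminf_le[OF xenum] weighted_Linf_norm_sum_le mult_nonneg_nonneg suminf_nonneg
        summable_Suc_mult_half_power) auto
  then have "Mnorm X senum xenum F \<le> (\<Sum>i\<in>{1..CARD('s)}. ennreal ((1/2) ^ i) * ennreal (2 * M))"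
    unfolding Mnorm_def by (intro sum_mono mult_left_mono) auto
  also have "\<dots> < \<infinity>"
    by (simp add: ennreal_mult'[symmetric] flip: sum_ennreal)
  finally show "Mnorm X senum xenum F < \<infinity>" .
qed

context decision_model
begin

lemma sandwiched_abs_le:
  assumes "sandwiched F" "x \<in> X" "\<gamma> \<in> nonneg_orthant"
  shows "\<bar>F \<gamma> x s\<bar> \<le> upper_bound \<gamma> x s"
proof -
  obtain a where "feas x s a"
    using standing[OF assms(2)] by blast
  then have "plan_payoff \<gamma> a x s \<le> F \<gamma> x s" and "- upper_bound \<gamma> x s \<le> plan_payoff \<gamma> a x s"
    using assms plan_payoff_abs_le[OF feasible_adm_plans] unfolding sandwiched_def upper_bound_def
    by (blast, fastforce)
  moreover have "F \<gamma> x s \<le> upper_bound \<gamma> x s"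
    using assms unfolding sandwiched_def by blast
  ultimately show ?thesis by linarith
qed

lemma value_lim_in_Mspace:
  assumes xenum: "bij_betw xenum (enum_index X) X"
  shows "value_lim \<in> Mspace X senum xenum"
proof (rule in_Mspace_if_Linf_norm_linear[OF xenum])
  show "0 \<le> (1 + real CARD('i)) * L"
    using L_nonneg by simp
  fix x s and k :: nat assume x: "x \<in> X" and k: "1 \<le> k"
  show "Linf_norm (real k) (\<lambda>\<gamma>. value_lim \<gamma> x s) \<le> ereal ((1 + real CARD('i)) * L * real k)"
  proof (rule Linf_norm_le)
    show "continuous_on (Bk (real k)) (\<lambda>\<gamma>. value_lim \<gamma> x s)"
      using lipschitz_in_mult_value_lim x Bk_subset_nonneg_orthant L_nonneg
      unfolding lipschitz_in_mult_def by (intro continuous_on_if_l1_lipschitz) blast+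
    fix \<gamma> :: "real^'i" assume \<gamma>: "\<gamma> \<in> Bk (real k)"
    have "\<bar>value_lim \<gamma> x s\<bar> \<le> (1 + (\<Sum>i\<in>UNIV. \<gamma> $ i)) * L"
      using sandwiched_abs_le[OF sandwiched_value_lim x] \<gamma> Bk_subset_nonneg_orthant
      unfolding upper_bound_def by blast
    also have "\<dots> \<le> (1 + real CARD('i) * real k) * L"
      using sum_le_of_mem_Bk[OF \<gamma>] L_nonneg by (intro mult_right_mono) auto
    also have "\<dots> \<le> (1 + real CARD('i)) * real k * L"
      using k L_nonneg by (intro mult_right_mono) (auto simp: algebra_simps)
    finally show "\<bar>value_lim \<gamma> x s\<bar> \<le> (1 + real CARD('i)) * L * real k"
      by (simp add: mult_ac)
  qed
qed

end

context decision_model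
begin

lemma value_lim_in_Nspace:
  assumes "bij_betw xenum (enum_index X) X"
  shows "value_lim \<in> Nspace \<beta> P A X p \<zeta> r g gbar senum xenum"
  using value_lim_in_Mspace[OF assms] convex_in_mult_value_lim lipschitz_in_mult_value_lim sandwiched_value_lim
  unfolding Nspace_def convex_in_mult_def lipschitz_in_mult_def sandwiched_def
    upper_bound_def plan_payoff_def plan_value_def
  by blast

end

section \<open>Solutions are bounded by the dual value\<close>

lemma convolution_geometric_tendsto_zero:
  fixes a :: "nat \<Rightarrow> real"
  assumes a: "summable a" "\<And>n. 0 \<le> a n" and b: "0 \<le> b" "b < 1"
  shows "(\<lambda>T. \<Sum>j<T. b ^ (T - j) * a j) \<longlonglongrightarrow> 0"
proof -
  define c where "c T = (\<Sum>j\<le>T. a j * b ^ (T - j))" for T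
  have "summable (\<lambda>k. norm (a k))" "summable (\<lambda>k. norm (b ^ k))"
    using a b by (simp_all add: summable_geometric)
  then have "summable c"
    unfolding c_def by (rule summable_Cauchy_product)
  then have c: "c \<longlonglongrightarrow> 0"
    by (rule summable_LIMSEQ_zero)
  have le: "(\<Sum>j<T. b ^ (T - j) * a j) \<le> c T" for T
  proof -
    have "(\<Sum>j<T. b ^ (T - j) * a j) \<le> (\<Sum>j\<le>T. b ^ (T - j) * a j)"
      by (rule sum_mono2) (use a b in auto)
    then show ?thesis
      unfolding c_def by (simp add: mult.commute)
  qed
  have ge: "0 \<le> (\<Sum>j<T. b ^ (T - j) * a j)" for T
    using a b by (intro sum_nonneg) auto
  show ?thesis
    by (rule tendsto_sandwich[OF _ _ tendsto_const c]) (use le ge in auto)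
qed

text \<open>The path generated by a feedback rule \<open>ch x \<gamma> s\<close> that also depends on a multiplier
  \<open>\<gamma>\<close>, updated along the path by \<open>\<gamma>(s^(t+1)) = \<gamma>(s^t) + lv(post-action history up to t)\<close>.
  At a history it returns the current state, the current multiplier and the post-action history.\<close>

fun guided_path :: "('x \<Rightarrow> 'a \<Rightarrow> 's \<Rightarrow> 'x) \<Rightarrow> ('x \<Rightarrow> 'g \<Rightarrow> 's \<Rightarrow> 'a) \<Rightarrow> (('s \<times> 'a) list \<Rightarrow> 'g)
    \<Rightarrow> 'x \<Rightarrow> 'g::plus \<Rightarrow> 's list \<Rightarrow> 'x \<times> 'g \<times> ('s \<times> 'a) list" where
  "guided_path \<zeta> ch lv x0 g0 [] = (x0, g0, [])"
| "guided_path \<zeta> ch lv x0 g0 [s] = (x0, g0, [(s, ch x0 g0 s)])"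
| "guided_path \<zeta> ch lv x0 g0 (s # s' # h) =
    (let t = guided_path \<zeta> ch lv x0 g0 (s' # h);
         x = \<zeta> (fst t) (snd (hd (snd (snd t)))) s';
         \<gamma> = fst (snd t) + lv (snd (snd t))
     in (x, \<gamma>, (s, ch x \<gamma> s) # snd (snd t)))"

definition guided_plan :: "('x \<Rightarrow> 'a \<Rightarrow> 's \<Rightarrow> 'x) \<Rightarrow> ('x \<Rightarrow> 'g \<Rightarrow> 's \<Rightarrow> 'a) \<Rightarrow> (('s \<times> 'a) list \<Rightarrow> 'g)
    \<Rightarrow> 'x \<Rightarrow> 'g::plus \<Rightarrow> 's list \<Rightarrow> 'a" where
  "guided_plan \<zeta> ch lv x0 g0 k = snd (hd (snd (snd (guided_path \<zeta> ch lv x0 g0 k))))"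

lemma guided_plan_Cons:
  "guided_plan \<zeta> ch lv x0 g0 (s # k)
    = ch (fst (guided_path \<zeta> ch lv x0 g0 (s # k))) (fst (snd (guided_path \<zeta> ch lv x0 g0 (s # k)))) s"
  by (cases k) (simp_all add: guided_plan_def Let_def)

lemma guided_path_post_hist:
  "snd (snd (guided_path \<zeta> ch lv x0 g0 k)) = post_hist (guided_plan \<zeta> ch lv x0 g0) k"
proof (induction \<zeta> ch lv x0 g0 k rule: guided_path.induct)
  case (2 \<zeta> ch lv x0 g0 s)
  show ?case by (simp only: post_hist.simps guided_plan_Cons) simp
next
  case (3 \<zeta> ch lv x0 g0 s s' h)
  have "snd (snd (guided_path \<zeta> ch lv x0 g0 (s # s' # h)))
      = (s, guided_plan \<zeta> ch lv x0 g0 (s # s' # h)) # snd (snd (guided_path \<zeta> ch lv x0 g0 (s' # h)))"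
    by (simp only: guided_plan_Cons) (simp add: Let_def)
  with 3 show ?case by (simp only: post_hist.simps)
qed simp

lemma guided_path_state:
  "k \<noteq> [] \<Longrightarrow> fst (guided_path \<zeta> ch lv x0 g0 k) = state_path \<zeta> (guided_plan \<zeta> ch lv x0 g0) x0 k"
proof (induction \<zeta> ch lv x0 g0 k rule: guided_path.induct)
  case (3 \<zeta> ch lv x0 g0 s s' h)
  have "fst (guided_path \<zeta> ch lv x0 g0 (s # s' # h))
      = \<zeta> (fst (guided_path \<zeta> ch lv x0 g0 (s' # h))) (guided_plan \<zeta> ch lv x0 g0 (s' # h)) s'"
    by (simp add: Let_def guided_plan_def)
  with 3 show ?case by simp
qed simp_all

lemma guided_path_multiplier_Cons:
  "k \<noteq> [] \<Longrightarrow> fst (snd (guided_path \<zeta> ch lv x0 g0 (s # k)))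
    = fst (snd (guided_path \<zeta> ch lv x0 g0 k)) + lv (post_hist (guided_plan \<zeta> ch lv x0 g0) k)"
  by (cases k) (simp_all add: Let_def guided_path_post_hist del: post_hist.simps)

locale dual_bound = decision_model P \<beta> A X \<zeta> p r g gbar
  for P :: "'s::finite \<Rightarrow> 's \<Rightarrow> real" and \<beta> :: real and A :: "'a set" and X :: "'x set"
    and \<zeta> p r and g :: "'i::finite \<Rightarrow> 'x \<Rightarrow> 'a \<Rightarrow> 's \<Rightarrow> real" and gbar +
  fixes F :: "real^'i \<Rightarrow> 'x \<Rightarrow> 's \<Rightarrow> real" and lam :: "'i \<Rightarrow> ('s \<times> 'a) list \<Rightarrow> real"
    and \<gamma>0 :: "real^'i" and x0 :: 'x and s0 :: 's
  assumes F_le_upper_bound: "\<And>x s \<gamma>. x \<in> X \<Longrightarrow> \<gamma> \<in> nonneg_orthant \<Longrightarrow> F \<gamma> x s \<le> upper_bound \<gamma> x s"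
    and F_solves: "\<And>x s \<gamma>. x \<in> X \<Longrightarrow> \<gamma> \<in> nonneg_orthant \<Longrightarrow> ereal (F \<gamma> x s) = rhs F \<gamma> x s"
    and \<gamma>0: "\<gamma>0 \<in> nonneg_orthant" and x0: "x0 \<in> X" and lam: "lam \<in> Lambda_set \<beta> P A s0"
begin

definition maximizer :: "'x \<Rightarrow> real^'i \<Rightarrow> 's \<Rightarrow> 'a" where
  "maximizer x \<gamma> s =
     (SOME a. a \<in> A_tilde A p x s \<and> (\<forall>\<mu>\<in>nonneg_orthant. F \<gamma> x s \<le> bellman_obj F \<gamma> x s a \<mu>))"

definition lam_vec :: "('s \<times> 'a) list \<Rightarrow> real^'i" where
  "lam_vec ph = (\<chi> i. lam i ph)"

definition plan :: "'s list \<Rightarrow> 'a" where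
  "plan = guided_plan \<zeta> maximizer lam_vec x0 \<gamma>0"

definition multiplier :: "'s list \<Rightarrow> real^'i" where
  "multiplier k = fst (snd (guided_path \<zeta> maximizer lam_vec x0 \<gamma>0 k))"

definition state :: "'s list \<Rightarrow> 'x" where
  "state k = state_path \<zeta> plan x0 k"

lemma lam_nonneg: "0 \<le> lam i ph"
  using lam by (simp add: Lambda_set_def)

lemma lam_vec_nonneg: "lam_vec ph \<in> nonneg_orthant"
  by (simp add: lam_vec_def mem_nonneg_orthant lam_nonneg)

lemma maximizer:
  assumes x: "x \<in> X" and \<gamma>: "\<gamma> \<in> nonneg_orthant"
  shows "maximizer x \<gamma> s \<in> A_tilde A p x s"
    and "\<And>\<mu>. \<mu> \<in> nonneg_orthant \<Longrightarrow> F \<gamma> x s \<le> bellman_obj F \<gamma> x s (maximizer x \<gamma> s) \<mu>"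
proof -
  obtain a where a: "a \<in> A_tilde A p x s"
    and eq: "rhs F \<gamma> x s = (INF \<mu>\<in>nonneg_orthant. ereal (bellman_obj F \<gamma> x s a \<mu>))"
    using rhs_attained[OF x] .
  have "F \<gamma> x s \<le> bellman_obj F \<gamma> x s a \<mu>" if "\<mu> \<in> nonneg_orthant" for \<mu>
  proof -
    have "ereal (F \<gamma> x s) = (INF \<mu>\<in>nonneg_orthant. ereal (bellman_obj F \<gamma> x s a \<mu>))"
      using F_solves[OF x \<gamma>] eq by simp
    also have "\<dots> \<le> ereal (bellman_obj F \<gamma> x s a \<mu>)"
      by (rule INF_lower[OF that])
    finally show ?thesis by simp
  qed
  with a have "\<exists>a. a \<in> A_tilde A p x s \<and> (\<forall>\<mu>\<in>nonneg_orthant. F \<gamma> x s \<le> bellman_obj F \<gamma> x s a \<mu>)"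
    by blast
  then have "maximizer x \<gamma> s \<in> A_tilde A p x s
      \<and> (\<forall>\<mu>\<in>nonneg_orthant. F \<gamma> x s \<le> bellman_obj F \<gamma> x s (maximizer x \<gamma> s) \<mu>)"
    unfolding maximizer_def by (rule someI_ex)
  then show "maximizer x \<gamma> s \<in> A_tilde A p x s"
    and "\<And>\<mu>. \<mu> \<in> nonneg_orthant \<Longrightarrow> F \<gamma> x s \<le> bellman_obj F \<gamma> x s (maximizer x \<gamma> s) \<mu>"
    by blast+
qed

lemma plan_Cons: "plan (s # k) = maximizer (state (s # k)) (multiplier (s # k)) s"
  unfolding plan_def state_def multiplier_def
  using guided_plan_Cons guided_path_state[of "s # k"] by (metis list.distinct(1))

lemma plan_eq_maximizer: "k \<noteq> [] \<Longrightarrow> plan k = maximizer (state k) (multiplier k) (hd k)"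
  by (cases k) (simp_all add: plan_Cons)

lemma multiplier_singleton: "multiplier [s] = \<gamma>0"
  by (simp add: multiplier_def)

lemma multiplier_Cons: "k \<noteq> [] \<Longrightarrow> multiplier (s # k) = multiplier k + lam_vec (post_hist plan k)"
  unfolding multiplier_def plan_def by (rule guided_path_multiplier_Cons)

lemma state_singleton: "state [s] = x0"
  by (simp add: state_def)

lemma state_Cons: "k \<noteq> [] \<Longrightarrow> state (s # k) = \<zeta> (state k) (plan k) (hd k)"
  unfolding state_def by (rule state_path_Cons)

lemma state_multiplier_in:
  assumes "k \<in> hists s0"
  shows "state k \<in> X \<and> multiplier k \<in> nonneg_orthant"
  using assms
proof (induction rule: hists_induct)
  case singleton
  then show ?case using x0 \<gamma>0 by (simp add: state_singleton multiplier_singleton)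
next
  case (Cons s k)
  have k: "k \<noteq> []" "state k \<in> X" "multiplier k \<in> nonneg_orthant"
    using hists_nonempty[OF Cons(1)] Cons(2) by auto
  have "plan k \<in> A"
    using maximizer(1)[OF k(2,3)] A_tilde_subset unfolding plan_eq_maximizer[OF k(1)] by blast
  then show ?case
    using k \<zeta>_in_X nonneg_orthant_add[OF _ lam_vec_nonneg] by (simp add: state_Cons multiplier_Cons)
qed

lemma plan_maximizes:
  assumes "k \<in> hists s0"
  shows "plan k \<in> A_tilde A p (state k) (hd k)"
    and "\<And>\<mu>. \<mu> \<in> nonneg_orthant \<Longrightarrow>
      F (multiplier k) (state k) (hd k) \<le> bellman_obj F (multiplier k) (state k) (hd k) (plan k) \<mu>"
proof -
  have k: "state k \<in> X" "multiplier k \<in> nonneg_orthant"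
    using state_multiplier_in[OF assms] by auto
  show "plan k \<in> A_tilde A p (state k) (hd k)"
    and "\<And>\<mu>. \<mu> \<in> nonneg_orthant \<Longrightarrow>
      F (multiplier k) (state k) (hd k) \<le> bellman_obj F (multiplier k) (state k) (hd k) (plan k) \<mu>"
    unfolding plan_eq_maximizer[OF hists_nonempty[OF assms]] by (rule maximizer[OF k])+
qed

lemma plan_in_adm_plans: "plan \<in> adm_plans A p \<zeta> x0 s0"
  unfolding adm_plans_def using plan_maximizes(1) by (simp add: state_def)

end

lemma finite_posthists:
  fixes A :: "'a set" and s0 :: "'s::finite"
  shows "finite A \<Longrightarrow> finite (posthists A s0 t)"
proof (rule finite_subset)
  show "posthists A s0 t \<subseteq> {xs. set xs \<subseteq> (UNIV::'s::finite set) \<times> A \<and> length xs = Suc t}"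
    unfolding posthists_def by auto
  assume "finite A"
  then show "finite {xs. set xs \<subseteq> (UNIV::'s set) \<times> A \<and> length xs = Suc t}"
    by (intro finite_lists_length_eq finite_cartesian_product) simp_all
qed

context dual_bound
begin

definition rew :: "'s list \<Rightarrow> real" where
  "rew k = path_fun \<zeta> plan x0 r k"

definition con :: "'i \<Rightarrow> 's list \<Rightarrow> real" where
  "con i k = path_fun \<zeta> plan x0 (g i) k"

definition con_value :: "'i \<Rightarrow> 's list \<Rightarrow> real" where
  "con_value i k = cont_value \<beta> P (con i) k"

definition lam_at :: "'i \<Rightarrow> 's list \<Rightarrow> real" where
  "lam_at i k = lam i (post_hist plan k)"

definition lam_sum :: "'s list \<Rightarrow> real" where
  "lam_sum k = (\<Sum>i\<in>UNIV. lam_at i k)"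

definition penalty :: "'s list \<Rightarrow> real" where
  "penalty k = (\<Sum>i\<in>UNIV. lam_at i k * (con_value i k - gbar i))"

definition lam_mass :: "nat \<Rightarrow> real" where
  "lam_mass t = \<beta> ^ t * cond_exp P [s0] t lam_sum"

abbreviation "K \<equiv> L + (\<Sum>i\<in>UNIV. \<bar>gbar i\<bar>)"

lemma lam_at_nonneg: "0 \<le> lam_at i k"
  by (simp add: lam_at_def lam_nonneg)

lemma lam_sum_nonneg: "0 \<le> lam_sum k"
  by (simp add: lam_sum_def lam_at_nonneg sum_nonneg)

lemma rew_abs_le: "k \<in> hists s0 \<Longrightarrow> \<bar>rew (e @ k)\<bar> \<le> sup_r"
  unfolding rew_def by (rule path_fun_abs_le[OF r_bounded plan_in_adm_plans x0])

lemma con_abs_le: "k \<in> hists s0 \<Longrightarrow> \<bar>con i (e @ k)\<bar> \<le> sup_g i"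
  unfolding con_def by (rule path_fun_abs_le[OF g_bounded plan_in_adm_plans x0])

lemma con_value_abs_le: "k \<in> hists s0 \<Longrightarrow> \<bar>con_value i k\<bar> \<le> L"
proof -
  assume "k \<in> hists s0"
  then have "\<bar>con_value i k\<bar> \<le> sup_g i / (1 - \<beta>)"
    unfolding con_value_def by (intro cont_value_abs_bound con_abs_le)
  then show ?thesis
    using supnorm_div_le_L[OF sup_g_le[of i]] by linarith
qed

lemma penalty_abs_le: "k \<in> hists s0 \<Longrightarrow> \<bar>penalty k\<bar> \<le> K * lam_sum k"
proof -
  assume k: "k \<in> hists s0"
  have "\<bar>con_value i k - gbar i\<bar> \<le> K" for i
    using con_value_abs_le[OF k, of i] member_le_sum[of i UNIV "\<lambda>i. \<bar>gbar i\<bar>"] by auto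
  then have "\<bar>lam_at i k * (con_value i k - gbar i)\<bar> \<le> lam_at i k * K" for i
    unfolding abs_mult using lam_at_nonneg[of i k] by (simp add: mult_left_mono)
  then have "\<bar>penalty k\<bar> \<le> (\<Sum>i\<in>UNIV. lam_at i k * K)"
    unfolding penalty_def by (intro order_trans[OF sum_abs] sum_mono)
  also have "(\<Sum>i\<in>UNIV. lam_at i k * K) = K * lam_sum k"
    unfolding lam_sum_def by (simp add: sum_distrib_left mult.commute)
  finally show ?thesis .
qed

lemma set_post_hist_plan: "h \<in> hists s0 \<Longrightarrow> set (map snd (post_hist plan h)) \<subseteq> A"
proof (induction rule: hists_induct)
  case singleton
  then show ?case
    using plan_maximizes(1)[of "[s0]"] A_tilde_subset by auto
next
  case (Cons s k)
  have "plan (s # k) \<in> A"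
    using plan_maximizes(1)[OF hists_Cons[OF Cons(1)]] A_tilde_subset by blast
  with Cons(2) show ?case
    by simp
qed

lemma lam_mass_nonneg: "0 \<le> lam_mass t"
  unfolding lam_mass_def using \<beta>_pos by (intro mult_nonneg_nonneg cond_exp_nonneg lam_sum_nonneg) auto

text \<open>The summability condition defining tilde Lambda, read along the plan: the post-action
  histories generated by the plan are distinct and all lie in \<open>posthists\<close>.\<close>

lemma summable_lam_mass: "summable lam_mass"
proof -
  define b where "b t = (\<Sum>ht\<in>posthists A s0 t. \<Sum>i\<in>UNIV. \<beta> ^ t * lam i ht * path_prob P (map fst ht))" for t
  have b: "summable b"
    using lam unfolding Lambda_set_def b_def by simp
  have le: "lam_mass t \<le> b t" for t
  proof -
    let ?ph = "\<lambda>e. post_hist plan (e @ [s0])"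
    let ?E = "{e::'s list. length e = t}"
    have inj: "inj_on ?ph ?E"
    proof (rule inj_onI)
      fix e e' assume "?ph e = ?ph e'"
      then have "map fst (?ph e) = map fst (?ph e')" by simp
      then show "e = e'" by (simp add: map_fst_post_hist)
    qed
    have sub: "?ph ` ?E \<subseteq> posthists A s0 t"
      unfolding posthists_def using set_post_hist_plan[OF hists_append[OF hists_singleton]]
      by (auto simp: length_post_hist map_fst_post_hist)
    have "lam_mass t = (\<Sum>e\<in>?E. \<beta> ^ t * (ext_prob P e [s0] * (\<Sum>i\<in>UNIV. lam i (?ph e))))"
      unfolding lam_mass_def cond_exp_def lam_sum_def lam_at_def by (simp add: sum_distrib_left)
    also have "\<dots> = (\<Sum>e\<in>?E. \<Sum>i\<in>UNIV. \<beta> ^ t * lam i (?ph e) * path_prob P (map fst (?ph e)))"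
      by (rule sum.cong[OF refl]) (simp add: map_fst_post_hist path_prob_def sum_distrib_left mult_ac)
    also have "\<dots> = (\<Sum>ht\<in>?ph ` ?E. \<Sum>i\<in>UNIV. \<beta> ^ t * lam i ht * path_prob P (map fst ht))"
      by (simp add: sum.reindex[OF inj])
    also have "\<dots> \<le> b t"
      unfolding b_def
    proof (rule sum_mono2[OF finite_posthists[OF A_finite] sub])
      show "0 \<le> (\<Sum>i\<in>UNIV. \<beta> ^ t * lam i ht * path_prob P (map fst ht))" for ht
        unfolding path_prob_def using \<beta>_pos
        by (intro sum_nonneg mult_nonneg_nonneg lam_nonneg ext_prob_nonneg) auto
    qed
    finally show ?thesis .
  qed
  show ?thesis
    by (rule summable_comparison_test'[OF b]) (use le lam_mass_nonneg in auto)
qed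

text \<open>Conditioning on a history of positive probability multiplies discounted expectations by at
  most a constant, so summability transfers from the root to every history.\<close>

lemma disc_summable_lam_sum: "k \<in> hists s0 \<Longrightarrow> disc_summable k lam_sum"
proof -
  assume k: "k \<in> hists s0"
  define e where "e = butlast k"
  define T where "T = length e"
  have ke: "k = e @ [s0]"
    unfolding e_def by (rule hists_eq_append[OF k])
  define c where "c = 1 / (\<beta> ^ T * ext_prob P e [s0])"
  have pe: "0 < ext_prob P e [s0]"
    by (rule ext_prob_pos)
  have le: "\<beta> ^ n * cond_exp P k n lam_sum \<le> c * lam_mass (n + T)" for n
  proof -
    have "ext_prob P e [s0] * cond_exp P k n lam_sum \<le> cond_exp P [s0] T (\<lambda>k'. cond_exp P k' n lam_sum)"
      unfolding ke T_def by (rule ext_prob_mult_le_cond_exp) (auto intro!: cond_exp_nonneg lam_sum_nonneg)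
    also have "\<dots> = cond_exp P [s0] (n + T) lam_sum"
      by (simp add: cond_exp_tower add.commute)
    finally have root: "ext_prob P e [s0] * cond_exp P k n lam_sum \<le> cond_exp P [s0] (n + T) lam_sum" .
    have "\<beta> ^ n * cond_exp P k n lam_sum = \<beta> ^ (n + T) * (ext_prob P e [s0] * cond_exp P k n lam_sum) * c"
      unfolding c_def using pe \<beta>_pos by (simp add: power_add)
    also have "\<dots> \<le> \<beta> ^ (n + T) * cond_exp P [s0] (n + T) lam_sum * c"
      unfolding c_def using root pe \<beta>_pos by (intro mult_right_mono mult_left_mono) auto
    also have "\<dots> = c * lam_mass (n + T)"
      unfolding lam_mass_def by simp
    finally show ?thesis .
  qed
  have summ: "summable (\<lambda>n. c * lam_mass (n + T))"
    by (rule summable_mult[OF summable_ignore_initial_segment[OF summable_lam_mass]])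
  have nonneg: "0 \<le> \<beta> ^ n * cond_exp P k n lam_sum" for n
    using \<beta>_pos by (intro mult_nonneg_nonneg cond_exp_nonneg lam_sum_nonneg) auto
  show ?thesis
    unfolding disc_summable_def by (rule summable_comparison_test'[OF summ]) (use le nonneg in auto)
qed

lemma disc_summable_penalty:
  assumes "k \<in> hists s0"
  shows "disc_summable k penalty"
proof (rule disc_summable_dominated)
  show "disc_summable k (\<lambda>k'. K * lam_sum k')"
    by (rule disc_summable_cmult[OF disc_summable_lam_sum[OF assms]])
  show "\<bar>penalty (e @ k)\<bar> \<le> K * lam_sum (e @ k)" for e
    by (rule penalty_abs_le[OF hists_append[OF assms]])
qed

lemma disc_summable_rew: "k \<in> hists s0 \<Longrightarrow> disc_summable k rew"
  by (rule disc_summable_bounded) (rule rew_abs_le)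

lemma disc_summable_con: "k \<in> hists s0 \<Longrightarrow> disc_summable k (con i)"
  by (rule disc_summable_bounded) (rule con_abs_le)

end

context dual_bound
begin

definition rew_value :: "'s list \<Rightarrow> real" where
  "rew_value k = cont_value \<beta> P rew k"

definition penalty_value :: "'s list \<Rightarrow> real" where
  "penalty_value k = cont_value \<beta> P penalty k"

definition lam_sum_value :: "'s list \<Rightarrow> real" where
  "lam_sum_value k = cont_value \<beta> P lam_sum k"

definition lagr_value :: "'s list \<Rightarrow> real" where
  "lagr_value k = rew_value k + (\<Sum>i\<in>UNIV. multiplier k $ i * con_value i k) + penalty_value k"

definition gap :: "'s list \<Rightarrow> real" where
  "gap k = F (multiplier k) (state k) (hd k) - lagr_value k"

definition mult_sum :: "'s list \<Rightarrow> real" where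
  "mult_sum k = (\<Sum>i\<in>UNIV. multiplier k $ i)"

lemma rew_value_rec: "k \<in> hists s0 \<Longrightarrow> rew_value k = rew k + \<beta> * (\<Sum>s'\<in>UNIV. P (hd k) s' * rew_value (s' # k))"
  unfolding rew_value_def by (rule cont_value_rec) (rule disc_summable_rew[OF hists_Cons])

lemma con_value_rec: "k \<in> hists s0 \<Longrightarrow> con_value i k = con i k + \<beta> * (\<Sum>s'\<in>UNIV. P (hd k) s' * con_value i (s' # k))"
  unfolding con_value_def by (rule cont_value_rec) (rule disc_summable_con[OF hists_Cons])

lemma penalty_value_rec:
  "k \<in> hists s0 \<Longrightarrow> penalty_value k = penalty k + \<beta> * (\<Sum>s'\<in>UNIV. P (hd k) s' * penalty_value (s' # k))"
  unfolding penalty_value_def by (rule cont_value_rec) (rule disc_summable_penalty[OF hists_Cons])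

lemma multiplier_Cons_nth: "k \<in> hists s0 \<Longrightarrow> multiplier (s # k) $ i = multiplier k $ i + lam_at i k"
  using multiplier_Cons[OF hists_nonempty] by (simp add: lam_at_def lam_vec_def)

lemma lagr_value_rec:
  assumes k: "k \<in> hists s0"
  shows "lagr_value k = rew k + (\<Sum>i\<in>UNIV. multiplier k $ i * con i k + lam_at i k * (con i k - gbar i))
    + \<beta> * (\<Sum>s'\<in>UNIV. P (hd k) s' * lagr_value (s' # k))"
proof -
  define E where "E f = (\<Sum>s'\<in>UNIV. P (hd k) s' * f (s' # k))" for f :: "'s list \<Rightarrow> real"
  have next_value: "E lagr_value
      = E rew_value + (\<Sum>i\<in>UNIV. (multiplier k $ i + lam_at i k) * E (con_value i)) + E penalty_value"
  proof -
    have "E (\<lambda>k'. \<Sum>i\<in>UNIV. multiplier k' $ i * con_value i k')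
        = (\<Sum>i\<in>UNIV. (multiplier k $ i + lam_at i k) * E (con_value i))"
      unfolding E_def multiplier_Cons_nth[OF k]
      by (simp add: sum_distrib_left mult.left_commute) (rule sum.swap)
    then show ?thesis
      unfolding E_def lagr_value_def by (simp add: distrib_left sum.distrib)
  qed
  have split: "lagr_value k = rew k + \<beta> * E rew_value
      + (\<Sum>i\<in>UNIV. multiplier k $ i * con_value i k + lam_at i k * (con_value i k - gbar i))
      + \<beta> * E penalty_value"
    unfolding lagr_value_def E_def
    using rew_value_rec[OF k] penalty_value_rec[OF k] by (simp add: penalty_def sum.distrib)
  have "(\<Sum>i\<in>UNIV. multiplier k $ i * con_value i k + lam_at i k * (con_value i k - gbar i))
      = (\<Sum>i\<in>UNIV. (multiplier k $ i * con i k + lam_at i k * (con i k - gbar i))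
                  + \<beta> * ((multiplier k $ i + lam_at i k) * E (con_value i)))"
    using con_value_rec[OF k] by (intro sum.cong refl) (simp add: E_def algebra_simps)
  also have "\<dots> = (\<Sum>i\<in>UNIV. multiplier k $ i * con i k + lam_at i k * (con i k - gbar i))
      + \<beta> * (\<Sum>i\<in>UNIV. (multiplier k $ i + lam_at i k) * E (con_value i))"
    by (simp add: sum.distrib sum_distrib_left)
  finally have "lagr_value k = rew k + (\<Sum>i\<in>UNIV. multiplier k $ i * con i k + lam_at i k * (con i k - gbar i))
      + \<beta> * E lagr_value"
    unfolding split next_value by (simp add: algebra_simps)
  then show ?thesis
    unfolding E_def .
qed

lemma gap_rec:
  assumes k: "k \<in> hists s0"
  shows "gap k \<le> \<beta> * (\<Sum>s'\<in>UNIV. P (hd k) s' * gap (s' # k))"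
proof -
  have "k \<noteq> []"
    by (rule hists_nonempty[OF k])
  have "F (multiplier k) (state k) (hd k) \<le> bellman_obj F (multiplier k) (state k) (hd k) (plan k) (lam_vec (post_hist plan k))"
    by (rule plan_maximizes(2)[OF k lam_vec_nonneg])
  also have "\<dots> = rew k + (\<Sum>i\<in>UNIV. multiplier k $ i * con i k + lam_at i k * (con i k - gbar i))
      + \<beta> * (\<Sum>s'\<in>UNIV. P (hd k) s' * F (multiplier (s' # k)) (state (s' # k)) (hd (s' # k)))"
    unfolding bellman_obj_def rew_def con_def path_fun_def lam_at_def
    by (simp add: state_def[symmetric] lam_vec_def multiplier_Cons[OF \<open>k \<noteq> []\<close>] state_Cons[OF \<open>k \<noteq> []\<close>])
  finally show ?thesis
    unfolding gap_def lagr_value_rec[OF k] by (simp add: algebra_simps sum_subtractf)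
qed

lemma cond_exp_gap_le: "cond_exp P [s0] n gap \<le> \<beta> * cond_exp P [s0] (Suc n) gap"
proof -
  have "cond_exp P [s0] n gap \<le> cond_exp P [s0] n (\<lambda>k. \<beta> * (\<Sum>s'\<in>UNIV. P (hd k) s' * gap (s' # k)))"
    by (rule cond_exp_mono) (rule gap_rec[OF hists_append[OF hists_singleton]])
  also have "\<dots> = \<beta> * cond_exp P [s0] (Suc n) gap"
    by (simp add: cond_exp_cmult cond_exp_Suc_last)
  finally show ?thesis .
qed

lemma gap_root_le: "gap [s0] \<le> \<beta> ^ N * cond_exp P [s0] N gap"
proof (induction N)
  case (Suc N)
  have "\<beta> ^ N * cond_exp P [s0] N gap \<le> \<beta> ^ N * (\<beta> * cond_exp P [s0] (Suc N) gap)"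
    using cond_exp_gap_le \<beta>_pos by (intro mult_left_mono) auto
  with Suc show ?case
    by (simp add: mult_ac)
qed simp

lemma penalty_value_abs_le: "k \<in> hists s0 \<Longrightarrow> \<bar>penalty_value k\<bar> \<le> K * lam_sum_value k"
proof -
  assume k: "k \<in> hists s0"
  have "\<bar>penalty_value k\<bar> \<le> cont_value \<beta> P (\<lambda>k'. K * lam_sum k') k"
    unfolding penalty_value_def
    by (rule cont_value_abs_le_dominated[OF disc_summable_cmult[OF disc_summable_lam_sum[OF k]]])
       (rule penalty_abs_le[OF hists_append[OF k]])
  then show ?thesis
    unfolding lam_sum_value_def by (simp add: cont_value_cmult[OF disc_summable_lam_sum[OF k]])
qed

lemma gap_le: "k \<in> hists s0 \<Longrightarrow> gap k \<le> 2 * L * (1 + mult_sum k) + K * lam_sum_value k"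
proof -
  assume k: "k \<in> hists s0"
  have \<gamma>: "multiplier k \<in> nonneg_orthant"
    using state_multiplier_in[OF k] by blast
  have "F (multiplier k) (state k) (hd k) \<le> (1 + mult_sum k) * L"
    using F_le_upper_bound state_multiplier_in[OF k] unfolding mult_sum_def upper_bound_def by blast
  moreover have "\<bar>rew_value k\<bar> \<le> sup_r / (1 - \<beta>)"
    unfolding rew_value_def by (intro cont_value_abs_bound rew_abs_le[OF k])
  then have "- rew_value k \<le> L"
    using supnorm_div_le_L[OF sup_r_le] by linarith
  moreover have "- (\<Sum>i\<in>UNIV. multiplier k $ i * con_value i k) \<le> mult_sum k * L"
  proof -
    have "- L \<le> con_value i k" for i
      using con_value_abs_le[OF k, of i] by linarith
    then have "(\<Sum>i\<in>UNIV. multiplier k $ i * (- L)) \<le> (\<Sum>i\<in>UNIV. multiplier k $ i * con_value i k)"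
      using \<gamma> by (intro sum_mono mult_left_mono) (auto simp: mem_nonneg_orthant)
    then show ?thesis
      unfolding mult_sum_def by (simp add: sum_negf sum_distrib_right)
  qed
  moreover have "- penalty_value k \<le> K * lam_sum_value k"
    using penalty_value_abs_le[OF k] by linarith
  ultimately show ?thesis
    unfolding gap_def lagr_value_def by (simp add: algebra_simps)
qed

lemma cond_exp_mult_sum: "cond_exp P [s0] N mult_sum = mult_sum [s0] + (\<Sum>j<N. cond_exp P [s0] j lam_sum)"
proof (induction N)
  case (Suc N)
  have "cond_exp P [s0] (Suc N) mult_sum = cond_exp P [s0] N (\<lambda>k. mult_sum k + lam_sum k)"
  proof (subst cond_exp_Suc_last, rule cond_exp_cong)
    fix e :: "'s list"
    have "mult_sum (s' # e @ [s0]) = mult_sum (e @ [s0]) + lam_sum (e @ [s0])" for s'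
      unfolding mult_sum_def lam_sum_def
      by (simp add: multiplier_Cons_nth[OF hists_append[OF hists_singleton]] sum.distrib)
    then show "(\<Sum>s'\<in>UNIV. P (hd (e @ [s0])) s' * mult_sum (s' # e @ [s0])) = mult_sum (e @ [s0]) + lam_sum (e @ [s0])"
      by (simp add: sum_distrib_right[symmetric] P_sum)
  qed
  with Suc show ?case
    by (simp add: cond_exp_add)
qed simp

lemma discounted_cond_exp_lam_sum_value: "\<beta> ^ N * cond_exp P [s0] N lam_sum_value = (\<Sum>n. lam_mass (n + N))"
proof -
  let ?E = "{e::'s list. length e = N}"
  have sm: "summable (\<lambda>n. \<beta> ^ n * cond_exp P (e @ [s0]) n lam_sum)" for e
    using disc_summable_lam_sum[OF hists_append[OF hists_singleton]] unfolding disc_summable_def .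
  have "cond_exp P [s0] N lam_sum_value
      = (\<Sum>e\<in>?E. ext_prob P e [s0] * (\<Sum>n. \<beta> ^ n * cond_exp P (e @ [s0]) n lam_sum))"
    unfolding cond_exp_def[of P "[s0]" N] lam_sum_value_def cont_value_eq_suminf ..
  also have "\<dots> = (\<Sum>e\<in>?E. \<Sum>n. ext_prob P e [s0] * (\<beta> ^ n * cond_exp P (e @ [s0]) n lam_sum))"
    by (rule sum.cong[OF refl]) (rule suminf_mult[OF sm, symmetric])
  also have "\<dots> = (\<Sum>n. \<Sum>e\<in>?E. ext_prob P e [s0] * (\<beta> ^ n * cond_exp P (e @ [s0]) n lam_sum))"
    by (rule suminf_sum[symmetric]) (rule summable_mult[OF sm])
  also have "\<dots> = (\<Sum>n. \<beta> ^ n * cond_exp P [s0] (N + n) lam_sum)"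
    unfolding cond_exp_tower[symmetric] cond_exp_def[of P "[s0]" N] by (simp add: sum_distrib_left mult_ac)
  finally have "\<beta> ^ N * cond_exp P [s0] N lam_sum_value = \<beta> ^ N * (\<Sum>n. \<beta> ^ n * cond_exp P [s0] (N + n) lam_sum)"
    by simp
  also have "\<dots> = (\<Sum>n. \<beta> ^ N * (\<beta> ^ n * cond_exp P [s0] (N + n) lam_sum))"
  proof (rule suminf_mult[symmetric])
    have eq: "(\<lambda>n. (1 / \<beta> ^ N) * lam_mass (n + N)) = (\<lambda>n. \<beta> ^ n * cond_exp P [s0] (N + n) lam_sum)"
      unfolding lam_mass_def using \<beta>_pos by (simp add: power_add add.commute)
    show "summable (\<lambda>n. \<beta> ^ n * cond_exp P [s0] (N + n) lam_sum)"
      using summable_mult[OF summable_ignore_initial_segment[OF summable_lam_mass], of "1 / \<beta> ^ N" N]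
      unfolding eq .
  qed
  also have "\<dots> = (\<Sum>n. lam_mass (n + N))"
    unfolding lam_mass_def by (simp add: power_add add.commute mult_ac)
  finally show ?thesis .
qed

text \<open>Telescoping: \<open>gap [s0]\<close> is bounded by the discounted expected bound of \<open>gap_le\<close> after
  \<open>N\<close> steps, which vanishes as \<open>N \<rightarrow> \<infinity>\<close> because the discounted multiplier mass is summable.\<close>

lemma gap_root_nonpos: "gap [s0] \<le> 0"
proof -
  define b where "b N = 2 * L * (\<beta> ^ N * (1 + mult_sum [s0]) + (\<Sum>j<N. \<beta> ^ (N - j) * lam_mass j))
    + K * (\<Sum>n. lam_mass (n + N))" for N
  have "gap [s0] \<le> b N" for N
  proof -
    have "cond_exp P [s0] N gap \<le> cond_exp P [s0] N (\<lambda>k. 2 * L * (1 + mult_sum k) + K * lam_sum_value k)"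
      by (rule cond_exp_mono) (rule gap_le[OF hists_append[OF hists_singleton]])
    then have "gap [s0] \<le> \<beta> ^ N * cond_exp P [s0] N (\<lambda>k. 2 * L * (1 + mult_sum k) + K * lam_sum_value k)"
      using gap_root_le[of N] \<beta>_pos by (meson mult_left_mono order_trans zero_le_power less_imp_le)
    also have "\<dots> = 2 * L * (\<beta> ^ N * (1 + cond_exp P [s0] N mult_sum)) + K * (\<beta> ^ N * cond_exp P [s0] N lam_sum_value)"
      by (simp add: cond_exp_add cond_exp_cmult cond_exp_const algebra_simps)
    also have "\<beta> ^ N * (1 + cond_exp P [s0] N mult_sum) = \<beta> ^ N * (1 + mult_sum [s0]) + (\<Sum>j<N. \<beta> ^ (N - j) * lam_mass j)"
    proof -
      have "\<beta> ^ N * cond_exp P [s0] j lam_sum = \<beta> ^ (N - j) * lam_mass j" if "j < N" for j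
        using that unfolding lam_mass_def by (simp add: power_add[symmetric])
      then show ?thesis
        unfolding cond_exp_mult_sum by (simp add: algebra_simps sum_distrib_left)
    qed
    finally show ?thesis
      unfolding b_def discounted_cond_exp_lam_sum_value .
  qed
  moreover have "b \<longlonglongrightarrow> 2 * L * (0 * (1 + mult_sum [s0]) + 0) + K * 0"
    unfolding b_def using \<beta>_pos \<beta>_less_1
    by (intro tendsto_add tendsto_mult tendsto_const LIMSEQ_power_zero suminf_exist_split2 summable_lam_mass
          convolution_geometric_tendsto_zero[OF summable_lam_mass lam_mass_nonneg]) auto
  ultimately show ?thesis
    by (intro LIMSEQ_le_const[of b 0]) auto
qed

lemma Lagr_plan_eq: "Lagr \<beta> P \<zeta> r g gbar plan lam \<gamma>0 x0 s0 = lagr_value [s0]"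
proof -
  have k: "[s0] \<in> hists s0"
    by simp
  have con: "disc_summable [s0] (\<lambda>h. \<Sum>i\<in>UNIV. \<gamma>0 $ i * con i h)"
    by (intro disc_summable_sum disc_summable_cmult disc_summable_con[OF k])
  have "Lagr \<beta> P \<zeta> r g gbar plan lam \<gamma>0 x0 s0
      = cont_value \<beta> P (\<lambda>h. rew h + (\<Sum>i\<in>UNIV. \<gamma>0 $ i * con i h) + penalty h) [s0]"
    unfolding Lagr_def rew_def con_def penalty_def lam_at_def con_value_def ..
  also have "\<dots> = rew_value [s0] + (\<Sum>i\<in>UNIV. \<gamma>0 $ i * con_value i [s0]) + penalty_value [s0]"
    unfolding rew_value_def penalty_value_def con_value_def
    using disc_summable_rew[OF k] disc_summable_penalty[OF k] con disc_summable_con[OF k]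
    by (simp add: cont_value_add disc_summable_add cont_value_sum disc_summable_cmult cont_value_cmult)
  finally show ?thesis
    unfolding lagr_value_def by (simp add: multiplier_singleton)
qed

lemma F_le_Lagr_plan: "F \<gamma>0 x0 s0 \<le> Lagr \<beta> P \<zeta> r g gbar plan lam \<gamma>0 x0 s0"
  using gap_root_nonpos unfolding gap_def Lagr_plan_eq by (simp add: multiplier_singleton state_singleton)

end

context decision_model
begin

lemma bellman_solution_le_D_tilde:
  assumes F: "F \<in> Nspace \<beta> P A X p \<zeta> r g gbar senum xenum"
    and solves: "\<forall>\<gamma>\<in>nonneg_orthant. \<forall>x\<in>X. \<forall>s. ereal (F \<gamma> x s) = rhs F \<gamma> x s"
    and \<gamma>: "\<gamma> \<in> nonneg_orthant" and x: "x \<in> X"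
  shows "ereal (F \<gamma> x s) \<le> D_tilde \<beta> P A p \<zeta> r g gbar \<gamma> x s"
  unfolding D_tilde_def
proof (rule INF_greatest)
  fix lam :: "'i \<Rightarrow> ('s \<times> 'a) list \<Rightarrow> real" assume lam: "lam \<in> Lambda_set \<beta> P A s"
  interpret dual_bound P \<beta> A X \<zeta> p r g gbar F lam \<gamma> x s
    using F solves \<gamma> x lam by unfold_locales (auto simp: Nspace_def upper_bound_def)
  show "ereal (F \<gamma> x s) \<le> (SUP a\<in>adm_plans A p \<zeta> x s. ereal (Lagr \<beta> P \<zeta> r g gbar a lam \<gamma> x s))"
    using F_le_Lagr_plan by (intro SUP_upper2[OF plan_in_adm_plans]) simp
qed

end

theorem corollary3p8:
  fixes P :: "'s::finite \<Rightarrow> 's \<Rightarrow> real"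
    and A :: "(real^'n::finite) set"
    and X :: "(real^'m::finite) set"
    and \<zeta> :: "real^'m \<Rightarrow> real^'n \<Rightarrow> 's \<Rightarrow> real^'m"
    and p r :: "real^'m \<Rightarrow> real^'n \<Rightarrow> 's \<Rightarrow> real"
    and g :: "'i::finite \<Rightarrow> real^'m \<Rightarrow> real^'n \<Rightarrow> 's \<Rightarrow> real"
    and gbar :: "'i \<Rightarrow> real"
    and \<beta> :: real
    and senum :: "nat \<Rightarrow> 's"
    and xenum :: "nat \<Rightarrow> real^'m"
  assumes P_pos: "\<And>s s'. P s s' > 0"
    and P_sum: "\<And>s. (\<Sum>s'\<in>UNIV. P s s') = 1"
    and A_fin: "finite A"
    and X_count: "countable X"
    and \<zeta>_X: "\<And>x a s. x \<in> X \<Longrightarrow> a \<in> A \<Longrightarrow> \<zeta> x a s \<in> X"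
    and r_bdd: "\<exists>B. \<forall>x\<in>X. \<forall>a\<in>A. \<forall>s. \<bar>r x a s\<bar> \<le> B"
    and g_bdd: "\<And>i. \<exists>B. \<forall>x\<in>X. \<forall>a\<in>A. \<forall>s. \<bar>g i x a s\<bar> \<le> B"
    and \<beta>: "0 < \<beta>" "\<beta> < 1"
    and senum: "bij_betw senum {1..CARD('s)} UNIV"
    and xenum: "bij_betw xenum (enum_index X) X"
    and standing: "\<And>x s. x \<in> X \<Longrightarrow> \<exists>a. feasible \<beta> P A p \<zeta> g gbar x s a"
  shows "(\<exists>F\<in>Nspace \<beta> P A X p \<zeta> r g gbar senum xenum.
            \<forall>\<gamma>\<in>nonneg_orthant. \<forall>x\<in>X. \<forall>s.
              ereal (F \<gamma> x s) = bellman_rhs \<beta> P A p \<zeta> r g gbar F \<gamma> x s)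
       \<and> (\<forall>F\<in>Nspace \<beta> P A X p \<zeta> r g gbar senum xenum.
            (\<forall>\<gamma>\<in>nonneg_orthant. \<forall>x\<in>X. \<forall>s.
              ereal (F \<gamma> x s) = bellman_rhs \<beta> P A p \<zeta> r g gbar F \<gamma> x s)
            \<longrightarrow> (\<forall>\<gamma>\<in>nonneg_orthant. \<forall>x\<in>X. \<forall>s.
                   ereal (F \<gamma> x s) \<le> D_tilde \<beta> P A p \<zeta> r g gbar \<gamma> x s))"
proof (cases "X = {}")
  case True
  then have "(\<lambda>_ _ _. 0) \<in> Nspace \<beta> P A X p \<zeta> r g gbar senum xenum"
    by (simp add: Nspace_def Mspace_def Mnorm_def enum_index_def)
  with True show ?thesis
    by blast
next
  case False
  interpret decision_model P \<beta> A X \<zeta> p r g gbar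
    using assms False by unfold_locales (auto simp: bounded_fun_def)
  show ?thesis
    using value_lim_in_Nspace[OF xenum] value_lim_solves_bellman bellman_solution_le_D_tilde by blast
qed

end
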